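(* The algebra $bH_n(q)$ is a free $\mathbb{S}$--module with basis $\mathcal{G}_n=\{\operatorname{E}_\mathbf{I} z_w\mid \mathbf{I}\in\mathcal{LP}_n,\ w\in\mathfrak{S}_{\|\mathbf{I}\|}\}$. In particular \[\dim bH_n(q)=\sum_{(\mu_1,\ldots,\mu_k)\in\mathcal{C}_n}\mu_1!\cdots\mu_k!,\] where $\mathcal{C}_n$ is the set of compositions of $n$ with no zero parts.
   Context: $\mathbb{S}=\mathbb{C}[q,q^{-1}]$. The tied--boxed Hecke algebra $bH_n(q)$ is the $\mathbb{S}$--algebra presented by generators $e_1,\dots,e_{n-1}$, $z_1,\dots,z_{n-1}$ and relations: $e_i^2=e_i$, $e_ie_j=e_je_i$ (all $i,j$); $z_iz_jz_i=z_jz_iz_j$ if $|i-j|=1$, $z_iz_j=z_jz_i$ if $|i-j|>1$; $e_iz_i=z_i$; $e_iz_j=z_je_i$ (all $i,j$); $z_i^2=e_i+(q-q^{-1})z_i$. $\mathcal{LP}_n$ is the set of linear set partitions of $[n]$ (all blocks are intervals). For $\mathbf{I}\in\mathcal{LP}_n$, $\operatorname{E}_\mathbf{I}=\prod e_i$, the product over those $i\in[n-1]$ such that $i$ and $i+1$ lie in the same block of $\mathbf{I}$; $\|\mathbf{I}\|$ is the composition of block sizes (in increasing order of blocks), and $\mathfrak{S}_{\|\mathbf{I}\|}$ is the Young subgroup of $\mathfrak{S}_n$ of permutations preserving each block of $\mathbf{I}$. For $w\in\mathfrak{S}_n$ with reduced expression $s_{i_1}\cdots s_{i_k}$, $z_w=z_{i_1}\cdots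 z_{i_k}$ (independent of the reduced expression by the braid relations). *)

theory Defs
  imports Complex_Main "HOL-Library.Poly_Mapping" "HOL-Library.Disjoint_Sets"
    "HOL-Combinatorics.Permutations" "HOL-Combinatorics.Transposition"
begin

text \<open>The ring S = C[q,q^-1] of Laurent polynomials, realised as the group
  algebra of the integers (finitely supported functions int to complex with
  convolution product).\<close>
type_synonym laurent = "int \<Rightarrow>\<^sub>0 complex"

definition qL :: laurent where "qL = Poly_Mapping.single 1 1"
definition qLinv :: laurent where "qLinv = Poly_Mapping.single (-1) 1"

datatype gen = Eg nat | Zg nat

text \<open>The free associative S-algebra on the generators: finitely supported
  functions from words to S.\<close>
type_synonym fa = "gen list \<Rightarrow>\<^sub>0 laurent"

definition fa_mult :: "fa \<Rightarrow> fa \<Rightarrow> fa" where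
  "fa_mult a b = (\<Sum>x\<in>Poly_Mapping.keys a. \<Sum>y\<in>Poly_Mapping.keys b.
      Poly_Mapping.single (x @ y) (Poly_Mapping.lookup a x * Poly_Mapping.lookup b y))"

definition fa_word :: "gen list \<Rightarrow> fa" where
  "fa_word w = Poly_Mapping.single w 1"

definition fa_scal :: "laurent \<Rightarrow> fa \<Rightarrow> fa" where
  "fa_scal s a = fa_mult (Poly_Mapping.single [] s) a"

definition gen_valid :: "nat \<Rightarrow> gen \<Rightarrow> bool" where
  "gen_valid n g = (case g of Eg i \<Rightarrow> 1 \<le> i \<and> i < n | Zg i \<Rightarrow> 1 \<le> i \<and> i < n)"

definition FA :: "nat \<Rightarrow> fa set" where
  "FA n = {a. \<forall>w\<in>Poly_Mapping.keys a. \<forall>g\<in>set w. gen_valid n g}"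

text \<open>Defining relations of bH_n(q), written as lhs - rhs.\<close>
definition bH_rels :: "nat \<Rightarrow> fa set" where
  "bH_rels n =
     {fa_word [Eg i, Eg i] - fa_word [Eg i] | i. 1 \<le> i \<and> i < n}
   \<union> {fa_word [Eg i, Eg j] - fa_word [Eg j, Eg i] | i j. 1 \<le> i \<and> i < n \<and> 1 \<le> j \<and> j < n}
   \<union> {fa_word [Zg i, Zg j, Zg i] - fa_word [Zg j, Zg i, Zg j] | i j.
        1 \<le> i \<and> i < n \<and> 1 \<le> j \<and> j < n \<and> (j = Suc i \<or> i = Suc j)}
   \<union> {fa_word [Zg i, Zg j] - fa_word [Zg j, Zg i] | i j.
        1 \<le> i \<and> i < n \<and> 1 \<le> j \<and> j < n \<and> Suc i < j \<or> 1 \<le> i \<and> i < n \<and> 1 \<le> j \<and> j < n \<and> Suc j < i}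
   \<union> {fa_word [Eg i, Zg i] - fa_word [Zg i] | i. 1 \<le> i \<and> i < n}
   \<union> {fa_word [Eg i, Zg j] - fa_word [Zg j, Eg i] | i j. 1 \<le> i \<and> i < n \<and> 1 \<le> j \<and> j < n}
   \<union> {fa_word [Zg i, Zg i] - fa_word [Eg i] - fa_scal (qL - qLinv) (fa_word [Zg i]) | i.
        1 \<le> i \<and> i < n}"

text \<open>Two-sided ideal of the free algebra FA n generated by the relations;
  bH_n(q) is the quotient FA n / bH_ideal n.\<close>
inductive_set bH_ideal :: "nat \<Rightarrow> fa set" for n :: nat where
  rel: "r \<in> bH_rels n \<Longrightarrow> r \<in> bH_ideal n"
| zero: "0 \<in> bH_ideal n"
| add: "a \<in> bH_ideal n \<Longrightarrow> b \<in> bH_ideal n \<Longrightarrow> a + b \<in> bH_ideal n"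
| lmult: "x \<in> FA n \<Longrightarrow> a \<in> bH_ideal n \<Longrightarrow> fa_mult x a \<in> bH_ideal n"
| rmult: "x \<in> FA n \<Longrightarrow> a \<in> bH_ideal n \<Longrightarrow> fa_mult a x \<in> bH_ideal n"

definition LP :: "nat \<Rightarrow> nat set set set" where
  "LP n = {P. partition_on {1..n} P \<and> (\<forall>B\<in>P. \<exists>a b. B = {a..b})}"

definition E_word :: "nat \<Rightarrow> nat set set \<Rightarrow> gen list" where
  "E_word n P = [Eg i. i \<leftarrow> [1..<n], \<exists>B\<in>P. i \<in> B \<and> Suc i \<in> B]"

definition young :: "nat \<Rightarrow> nat set set \<Rightarrow> (nat \<Rightarrow> nat) set" where
  "young n P = {w. w permutes {1..n} \<and> (\<forall>B\<in>P. w ` B = B)}"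

definition perm_of_word :: "nat list \<Rightarrow> nat \<Rightarrow> nat" where
  "perm_of_word is = foldr (\<lambda>i f. transpose i (Suc i) \<circ> f) is id"

definition reduced_word :: "nat \<Rightarrow> (nat \<Rightarrow> nat) \<Rightarrow> nat list \<Rightarrow> bool" where
  "reduced_word n w is \<longleftrightarrow> set is \<subseteq> {1..<n} \<and> perm_of_word is = w \<and>
     (\<forall>js. set js \<subseteq> {1..<n} \<and> perm_of_word js = w \<longrightarrow> length is \<le> length js)"

text \<open>z_w via a (chosen) reduced expression of w.\<close>
definition z_word :: "nat \<Rightarrow> (nat \<Rightarrow> nat) \<Rightarrow> gen list" where
  "z_word n w = map Zg (SOME is. reduced_word n w is)"

definition Gidx :: "nat \<Rightarrow> (nat set set \<times> (nat \<Rightarrow> nat)) set" where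
  "Gidx n = {(P, w). P \<in> LP n \<and> w \<in> young n P}"

definition basis_elt :: "nat \<Rightarrow> nat set set \<times> (nat \<Rightarrow> nat) \<Rightarrow> fa" where
  "basis_elt n x = fa_word (E_word n (fst x) @ z_word n (snd x))"

definition compositions :: "nat \<Rightarrow> nat list set" where
  "compositions n = {xs. sum_list xs = n \<and> 0 \<notin> set xs}"

end

(* Spanning: modulo the relations every word is a combination of words E_J z_w, where J is a set
   of links {i, i+1} and w permutes each block of J. Multiplying on the right by e_i adds the link
   i to J, since the e's are commuting idempotents and commute with the z's. Multiplying by z_i
   with i a link either extends a reduced word of w (ascent of w at i) or, by the quadratic
   relation, gives a combination of E_J z_(w s_i) e_i and E_J z_w (descent); if i is not a link,
   e_i z_i = z_i reduces to that case. That z_w does not depend on the reduced word is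
   Matsumoto's theorem: all reduced words of a permutation are braid equivalent.

   Independence: the algebra acts on functions of pairs (J, v) of a link set and an injection,
   e_i by projecting onto the pairs with i in J and z_i as the Hecke generator T_i on those.
   The word E_I z_w maps the unit vector at (J, id) to the unit vector at (J, w) if the links of
   I lie in J and to zero otherwise, so the coefficient matrix is unitriangular.

   Counting: linear partitions correspond to their link sets, and splitting a link set at its
   last non-link k gives the recursion c n = sum (k < n) c k * (n - k)!, which is also satisfied
   by the sum over compositions of the products of the factorials of the parts. *)
theory Submission
  imports Defs
begin

section \<open>The free algebra and the defining relations\<close>

lemma poly_mapping_sum_single:
  "(a :: 'x \<Rightarrow>\<^sub>0 'b::comm_monoid_add) =
     (\<Sum>x\<in>Poly_Mapping.keys a. Poly_Mapping.single x (Poly_Mapping.lookup a x))"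
proof (rule poly_mapping_eqI)
  fix k
  show "Poly_Mapping.lookup a k = Poly_Mapping.lookup (\<Sum>x\<in>Poly_Mapping.keys a. Poly_Mapping.single x (Poly_Mapping.lookup a x)) k"
    by (cases "k \<in> Poly_Mapping.keys a")
       (auto simp: lookup_sum lookup_single when_def in_keys_iff sum.delta)
qed

lemma fa_mult_eq_sum:
  assumes "finite X" "Poly_Mapping.keys a \<subseteq> X" "finite Y" "Poly_Mapping.keys b \<subseteq> Y"
  shows "fa_mult a b = (\<Sum>x\<in>X. \<Sum>y\<in>Y.
           Poly_Mapping.single (x @ y) (Poly_Mapping.lookup a x * Poly_Mapping.lookup b y))"
proof -
  have "fa_mult a b = (\<Sum>x\<in>X. \<Sum>y\<in>Poly_Mapping.keys b. Poly_Mapping.single (x @ y) (Poly_Mapping.lookup a x * Poly_Mapping.lookup b y))"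
    unfolding fa_mult_def
    by (rule sum.mono_neutral_left) (use assms in \<open>auto simp: in_keys_iff\<close>)
  also have "\<dots> = (\<Sum>x\<in>X. \<Sum>y\<in>Y. Poly_Mapping.single (x @ y) (Poly_Mapping.lookup a x * Poly_Mapping.lookup b y))"
    by (rule sum.cong[OF refl], rule sum.mono_neutral_left) (use assms in \<open>auto simp: in_keys_iff\<close>)
  finally show ?thesis .
qed

lemma fa_mult_single: "fa_mult (Poly_Mapping.single x s) (Poly_Mapping.single y t) = Poly_Mapping.single (x @ y) (s * t)"
  by (subst fa_mult_eq_sum[of "{x}" _ "{y}"]) auto

lemma fa_mult_add_left: "fa_mult (a + b) c = fa_mult a c + fa_mult b c"
  by (subst (1 2 3) fa_mult_eq_sum[of "Poly_Mapping.keys a \<union> Poly_Mapping.keys b" _ "Poly_Mapping.keys c"])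
     (use keys_add[of a b] in \<open>auto simp: lookup_add single_add distrib_right sum.distrib\<close>)

lemma fa_mult_add_right: "fa_mult c (a + b) = fa_mult c a + fa_mult c b"
  by (subst (1 2 3) fa_mult_eq_sum[of "Poly_Mapping.keys c" _ "Poly_Mapping.keys a \<union> Poly_Mapping.keys b"])
     (use keys_add[of a b] in \<open>auto simp: lookup_add single_add distrib_left sum.distrib\<close>)

lemma fa_mult_zero_left[simp]: "fa_mult 0 a = 0" by (simp add: fa_mult_def)
lemma fa_mult_zero_right[simp]: "fa_mult a 0 = 0" by (simp add: fa_mult_def)

lemma fa_mult_sum_left: "fa_mult (\<Sum>i\<in>I. f i) c = (\<Sum>i\<in>I. fa_mult (f i) c)"
  by (induction I rule: infinite_finite_induct) (auto simp: fa_mult_add_left)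

lemma fa_mult_sum_right: "fa_mult c (\<Sum>i\<in>I. f i) = (\<Sum>i\<in>I. fa_mult c (f i))"
  by (induction I rule: infinite_finite_induct) (auto simp: fa_mult_add_right)

lemma fa_mult_uminus_left: "fa_mult (- a) b = - fa_mult a b"
  by (metis add_eq_0_iff fa_mult_add_left fa_mult_zero_left)

lemma fa_mult_uminus_right: "fa_mult b (- a) = - fa_mult b a"
  by (metis add_eq_0_iff fa_mult_add_right fa_mult_zero_right)

lemma fa_mult_diff_left: "fa_mult (a - b) c = fa_mult a c - fa_mult b c"
  by (metis diff_conv_add_uminus fa_mult_add_left fa_mult_uminus_left)

lemma fa_mult_diff_right: "fa_mult c (a - b) = fa_mult c a - fa_mult c b"
  by (metis diff_conv_add_uminus fa_mult_add_right fa_mult_uminus_right)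

lemma fa_mult_assoc_single_single:
  "fa_mult (fa_mult (Poly_Mapping.single x s) (Poly_Mapping.single y t)) c =
     fa_mult (Poly_Mapping.single x s) (fa_mult (Poly_Mapping.single y t) c)"
  by (subst (1 2) poly_mapping_sum_single[of c]) (simp add: fa_mult_sum_right fa_mult_single mult.assoc)

lemma fa_mult_assoc_single:
  "fa_mult (fa_mult (Poly_Mapping.single x s) b) c = fa_mult (Poly_Mapping.single x s) (fa_mult b c)"
  by (subst (1 2) poly_mapping_sum_single[of b]) (simp add: fa_mult_sum_right fa_mult_sum_left fa_mult_assoc_single_single)

lemma fa_mult_assoc: "fa_mult (fa_mult a b) c = fa_mult a (fa_mult b c)"
  by (subst (1 2) poly_mapping_sum_single[of a]) (simp add: fa_mult_sum_left fa_mult_assoc_single)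

lemma lookup_fa_scal: "Poly_Mapping.lookup (fa_scal s a) w = s * Poly_Mapping.lookup a w"
proof -
  have "fa_scal s a = (\<Sum>y\<in>Poly_Mapping.keys a. Poly_Mapping.single y (s * Poly_Mapping.lookup a y))"
    unfolding fa_scal_def by (subst fa_mult_eq_sum[of "{[]}" _ "Poly_Mapping.keys a"]) auto
  then show ?thesis
    by (cases "w \<in> Poly_Mapping.keys a") (auto simp: lookup_sum lookup_single when_def in_keys_iff)
qed

lemma fa_scal_add_left: "fa_scal (s + t) a = fa_scal s a + fa_scal t a"
  by (rule poly_mapping_eqI) (simp add: lookup_fa_scal lookup_add distrib_right)

lemma fa_scal_sum: "fa_scal s (\<Sum>i\<in>I. f i) = (\<Sum>i\<in>I. fa_scal s (f i))"
  by (simp add: fa_scal_def fa_mult_sum_right)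

lemma fa_scal_one[simp]: "fa_scal 1 a = a"
  by (rule poly_mapping_eqI) (simp add: lookup_fa_scal)

lemma fa_scal_zero[simp]: "fa_scal 0 a = 0"
  by (rule poly_mapping_eqI) (simp add: lookup_fa_scal)

lemma fa_scal_scal: "fa_scal s (fa_scal t a) = fa_scal (s * t) a"
  by (rule poly_mapping_eqI) (simp add: lookup_fa_scal mult.assoc)

lemma fa_scal_single: "fa_scal s (Poly_Mapping.single w t) = Poly_Mapping.single w (s * t)"
  by (rule poly_mapping_eqI) (simp add: lookup_fa_scal lookup_single when_def)

lemma fa_scal_minus: "fa_scal (- s) a = - fa_scal s a"
  by (rule poly_mapping_eqI) (simp add: lookup_fa_scal)

lemma fa_mult_scal_left: "fa_mult (fa_scal s a) b = fa_scal s (fa_mult a b)"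
  by (simp add: fa_scal_def fa_mult_assoc)

lemma fa_mult_single_scal:
  "fa_mult (Poly_Mapping.single x u) (fa_scal s b) = fa_scal s (fa_mult (Poly_Mapping.single x u) b)"
  by (subst (1 2) poly_mapping_sum_single[of b]) (simp add: fa_mult_sum_right fa_scal_sum fa_mult_single fa_scal_single mult.assoc mult.left_commute)

lemma fa_mult_scal_right: "fa_mult a (fa_scal s b) = fa_scal s (fa_mult a b)"
  by (subst (1 2) poly_mapping_sum_single[of a]) (simp add: fa_mult_sum_left fa_scal_sum fa_mult_single_scal)

lemma fa_word_mult: "fa_mult (fa_word x) (fa_word y) = fa_word (x @ y)"
  by (simp add: fa_word_def fa_mult_single)

definition valid_word :: "nat \<Rightarrow> gen list \<Rightarrow> bool" where
  "valid_word n w = (\<forall>g\<in>set w. gen_valid n g)"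

lemma valid_word_append[simp]: "valid_word n (x @ y) = (valid_word n x \<and> valid_word n y)"
  by (auto simp: valid_word_def)

lemma valid_word_Cons[simp]: "valid_word n (g # y) = (gen_valid n g \<and> valid_word n y)"
  by (auto simp: valid_word_def)

lemma valid_word_Nil[simp]: "valid_word n []" by (simp add: valid_word_def)

lemma FA_word: "valid_word n w \<Longrightarrow> fa_word w \<in> FA n"
  by (auto simp: FA_def fa_word_def valid_word_def)

lemma FA_single: "valid_word n w \<Longrightarrow> Poly_Mapping.single w s \<in> FA n"
  by (auto simp: FA_def valid_word_def)

lemma FA_iff_valid_word: "a \<in> FA n \<longleftrightarrow> (\<forall>w\<in>Poly_Mapping.keys a. valid_word n w)"
  by (simp add: FA_def valid_word_def)

lemma bH_ideal_scal: "a \<in> bH_ideal n \<Longrightarrow> fa_scal s a \<in> bH_ideal n"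
  unfolding fa_scal_def by (rule bH_ideal.lmult) (auto intro: FA_single)

lemma bH_ideal_uminus: "a \<in> bH_ideal n \<Longrightarrow> - a \<in> bH_ideal n"
  using bH_ideal_scal[of a n "-1"] by (simp add: fa_scal_minus)

definition bH_equiv :: "nat \<Rightarrow> fa \<Rightarrow> fa \<Rightarrow> bool" where
  "bH_equiv n a b \<longleftrightarrow> a - b \<in> bH_ideal n"

lemma bH_equiv_refl[simp]: "bH_equiv n a a"
  by (simp add: bH_equiv_def bH_ideal.zero)

lemma bH_equiv_sym: "bH_equiv n a b \<Longrightarrow> bH_equiv n b a"
  unfolding bH_equiv_def by (drule bH_ideal_uminus) simp

lemma bH_equiv_trans: "bH_equiv n a b \<Longrightarrow> bH_equiv n b c \<Longrightarrow> bH_equiv n a c"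
  unfolding bH_equiv_def by (drule (1) bH_ideal.add) simp

lemma bH_equiv_add: "bH_equiv n a b \<Longrightarrow> bH_equiv n c d \<Longrightarrow> bH_equiv n (a + c) (b + d)"
  unfolding bH_equiv_def by (drule (1) bH_ideal.add) (simp add: algebra_simps)

lemma bH_equiv_scal: "bH_equiv n a b \<Longrightarrow> bH_equiv n (fa_scal s a) (fa_scal s b)"
  unfolding bH_equiv_def by (drule bH_ideal_scal[of _ _ s]) (simp add: fa_scal_def fa_mult_diff_right)

lemma bH_equiv_lmult: "x \<in> FA n \<Longrightarrow> bH_equiv n a b \<Longrightarrow> bH_equiv n (fa_mult x a) (fa_mult x b)"
  unfolding bH_equiv_def by (drule (1) bH_ideal.lmult) (simp add: fa_mult_diff_right)

lemma bH_equiv_rmult: "x \<in> FA n \<Longrightarrow> bH_equiv n a b \<Longrightarrow> bH_equiv n (fa_mult a x) (fa_mult b x)"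
  unfolding bH_equiv_def by (drule (1) bH_ideal.rmult) (simp add: fa_mult_diff_left)

lemma bH_equiv_word_context:
  assumes "bH_equiv n (fa_word u) (fa_word v)" "valid_word n x" "valid_word n y"
  shows "bH_equiv n (fa_word (x @ u @ y)) (fa_word (x @ v @ y))"
proof -
  have "bH_equiv n (fa_mult (fa_mult (fa_word x) (fa_word u)) (fa_word y))
                    (fa_mult (fa_mult (fa_word x) (fa_word v)) (fa_word y))"
    by (intro bH_equiv_rmult bH_equiv_lmult FA_word assms)
  then show ?thesis by (simp add: fa_word_mult)
qed

lemma bH_equiv_word_append_left:
  "bH_equiv n (fa_word u) (fa_word v) \<Longrightarrow> valid_word n x \<Longrightarrow> bH_equiv n (fa_word (x @ u)) (fa_word (x @ v))"
  using bH_equiv_word_context[of n u v x "[]"] by simp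

lemma bH_equiv_word_append_right:
  "bH_equiv n (fa_word u) (fa_word v) \<Longrightarrow> valid_word n y \<Longrightarrow> bH_equiv n (fa_word (u @ y)) (fa_word (v @ y))"
  using bH_equiv_word_context[of n u v "[]" y] by simp

declare bH_equiv_trans[trans]

lemma bH_equiv_rel: "a - b \<in> bH_rels n \<Longrightarrow> bH_equiv n a b"
  by (simp add: bH_equiv_def bH_ideal.rel)

definition qdiff :: laurent where "qdiff = qL - qLinv"

lemma bH_equiv_e_idem: "1 \<le> i \<Longrightarrow> i < n \<Longrightarrow> bH_equiv n (fa_word [Eg i, Eg i]) (fa_word [Eg i])"
  by (rule bH_equiv_rel, unfold bH_rels_def, rule UnI1, rule UnI1, rule UnI1, rule UnI1, rule UnI1, rule UnI1) blast

lemma bH_equiv_e_comm: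
  "1 \<le> i \<Longrightarrow> i < n \<Longrightarrow> 1 \<le> j \<Longrightarrow> j < n \<Longrightarrow> bH_equiv n (fa_word [Eg i, Eg j]) (fa_word [Eg j, Eg i])"
  by (rule bH_equiv_rel, unfold bH_rels_def, rule UnI1, rule UnI1, rule UnI1, rule UnI1, rule UnI1, rule UnI2) blast

lemma bH_equiv_braid:
  "1 \<le> i \<Longrightarrow> Suc i < n \<Longrightarrow>
     bH_equiv n (fa_word [Zg i, Zg (Suc i), Zg i]) (fa_word [Zg (Suc i), Zg i, Zg (Suc i)])"
  by (rule bH_equiv_rel, unfold bH_rels_def, rule UnI1, rule UnI1, rule UnI1, rule UnI1, rule UnI2,
      rule CollectI, rule exI[of _ i], rule exI[of _ "Suc i"]) simp

lemma bH_equiv_z_comm: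
  "1 \<le> i \<Longrightarrow> j < n \<Longrightarrow> Suc i < j \<Longrightarrow> bH_equiv n (fa_word [Zg i, Zg j]) (fa_word [Zg j, Zg i])"
  by (rule bH_equiv_rel, unfold bH_rels_def, rule UnI1, rule UnI1, rule UnI1, rule UnI2,
      rule CollectI, rule exI[of _ i], rule exI[of _ j]) auto

lemma bH_equiv_e_z: "1 \<le> i \<Longrightarrow> i < n \<Longrightarrow> bH_equiv n (fa_word [Eg i, Zg i]) (fa_word [Zg i])"
  by (rule bH_equiv_rel, unfold bH_rels_def, rule UnI1, rule UnI1, rule UnI2) blast

lemma bH_equiv_e_z_comm:
  "1 \<le> i \<Longrightarrow> i < n \<Longrightarrow> 1 \<le> j \<Longrightarrow> j < n \<Longrightarrow> bH_equiv n (fa_word [Eg i, Zg j]) (fa_word [Zg j, Eg i])"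
  by (rule bH_equiv_rel, unfold bH_rels_def, rule UnI1, rule UnI2) blast

lemma bH_equiv_z_square:
  "1 \<le> i \<Longrightarrow> i < n \<Longrightarrow> bH_equiv n (fa_word [Zg i, Zg i]) (fa_word [Eg i] + fa_scal qdiff (fa_word [Zg i]))"
  by (rule bH_equiv_rel, unfold bH_rels_def, rule UnI2) (auto simp: qdiff_def diff_diff_eq)

section \<open>Reduced words and Matsumoto's theorem\<close>

abbreviation sw :: "nat \<Rightarrow> nat \<Rightarrow> nat" where "sw i \<equiv> transpose i (Suc i)"

lemma perm_of_word_Nil[simp]: "perm_of_word [] = id"
  by (simp add: perm_of_word_def)

lemma perm_of_word_Cons[simp]: "perm_of_word (i # is) = sw i \<circ> perm_of_word is"
  by (simp add: perm_of_word_def)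

lemma perm_of_word_append: "perm_of_word (xs @ ys) = perm_of_word xs \<circ> perm_of_word ys"
  by (induction xs) auto

lemma perm_of_word_snoc: "perm_of_word (xs @ [i]) = perm_of_word xs \<circ> sw i"
  by (simp add: perm_of_word_append)

lemma perm_of_word_permutes: "set is \<subseteq> {1..<n} \<Longrightarrow> perm_of_word is permutes {1..n}"
  by (induction "is") (auto intro!: permutes_compose permutes_swap_id)

definition inversions :: "nat \<Rightarrow> (nat \<Rightarrow> nat) \<Rightarrow> (nat \<times> nat) set" where
  "inversions n u = {(a,b). a \<in> {1..n} \<and> b \<in> {1..n} \<and> a < b \<and> u b < u a}"

definition inversion_number :: "nat \<Rightarrow> (nat \<Rightarrow> nat) \<Rightarrow> nat" where
  "inversion_number n u = card (inversions n u)"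

lemma finite_inversions[simp]: "finite (inversions n u)"
  by (rule finite_subset[of _ "{1..n} \<times> {1..n}"]) (auto simp: inversions_def)

lemma inversion_number_id[simp]: "inversion_number n id = 0"
proof -
  have "inversions n id = {}" by (auto simp: inversions_def)
  then show ?thesis by (simp add: inversion_number_def)
qed

lemma inversions_comp_sw:
  assumes "1 \<le> i" "i < n"
  shows "inversions n (u \<circ> sw i) - {(i, Suc i)} =
           (\<lambda>(a,b). (sw i a, sw i b)) ` (inversions n u - {(i, Suc i)})"
proof -
  have inv: "sw i (sw i x) = x" for x by (simp add: transpose_def)
  have range: "sw i a \<in> {1..n} \<longleftrightarrow> a \<in> {1..n}" for a
    using assms by (auto simp: transpose_def)
  have lt: "a < b \<Longrightarrow> (a, b) \<noteq> (i, Suc i) \<Longrightarrow> sw i a < sw i b" for a b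
    by (auto simp: transpose_def)
  have pair: "(sw i a, sw i b) = (i, Suc i) \<longleftrightarrow> (a, b) = (Suc i, i)" for a b
    by (auto simp: transpose_def split: if_splits)
  show ?thesis
  proof (rule set_eqI, rule iffI)
    fix x assume x: "x \<in> inversions n (u \<circ> sw i) - {(i, Suc i)}"
    obtain a b where ab: "x = (a, b)" by (cases x)
    have "(sw i a, sw i b) \<in> inversions n u - {(i, Suc i)}"
      using x lt[of a b] range[of a] range[of b] pair[of a b] by (auto simp: inversions_def ab)
    moreover have "x = (\<lambda>(a,b). (sw i a, sw i b)) (sw i a, sw i b)" by (simp add: ab inv)
    ultimately show "x \<in> (\<lambda>(a,b). (sw i a, sw i b)) ` (inversions n u - {(i, Suc i)})" by blast
  next
    fix x assume "x \<in> (\<lambda>(a,b). (sw i a, sw i b)) ` (inversions n u - {(i, Suc i)})"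
    then obtain a b where ab: "x = (sw i a, sw i b)"
      and m: "(a, b) \<in> inversions n u" "(a,b) \<noteq> (i, Suc i)" by auto
    show "x \<in> inversions n (u \<circ> sw i) - {(i, Suc i)}"
      using m lt[of a b] range[of a] range[of b] pair[of a b] by (auto simp: inversions_def ab inv)
  qed
qed

lemma inversion_number_comp_sw:
  assumes "u permutes {1..n}" "1 \<le> i" "i < n"
  shows "u i < u (Suc i) \<Longrightarrow> inversion_number n (u \<circ> sw i) = Suc (inversion_number n u)"
    and "u (Suc i) < u i \<Longrightarrow> Suc (inversion_number n (u \<circ> sw i)) = inversion_number n u"
proof -
  have injf: "inj_on (\<lambda>(a,b). (sw i a, sw i b)) X" for X :: "(nat \<times> nat) set"
    by (rule inj_onI) (auto simp: transpose_eq_iff)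
  have eqc: "card (inversions n (u \<circ> sw i) - {(i, Suc i)}) = card (inversions n u - {(i, Suc i)})"
    by (simp add: inversions_comp_sw[OF assms(2,3)] card_image[OF injf])
  have mem1: "(i, Suc i) \<in> inversions n (u \<circ> sw i) \<longleftrightarrow> u i < u (Suc i)"
    using assms by (auto simp: inversions_def)
  have mem2: "(i, Suc i) \<in> inversions n u \<longleftrightarrow> u (Suc i) < u i"
    using assms by (auto simp: inversions_def)
  show "u i < u (Suc i) \<Longrightarrow> inversion_number n (u \<circ> sw i) = Suc (inversion_number n u)"
  proof -
    assume h: "u i < u (Suc i)"
    then have "(i, Suc i) \<notin> inversions n u" using mem2 by auto
    then have "inversions n u - {(i, Suc i)} = inversions n u" by auto
    moreover have "card (inversions n (u \<circ> sw i)) =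
        Suc (card (inversions n (u \<circ> sw i) - {(i, Suc i)}))"
      using h mem1 by (intro card.remove) simp_all
    ultimately show ?thesis using eqc by (simp add: inversion_number_def)
  qed
  show "u (Suc i) < u i \<Longrightarrow> Suc (inversion_number n (u \<circ> sw i)) = inversion_number n u"
  proof -
    assume h: "u (Suc i) < u i"
    then have "(i, Suc i) \<notin> inversions n (u \<circ> sw i)" using mem1 by auto
    then have "inversions n (u \<circ> sw i) - {(i, Suc i)} = inversions n (u \<circ> sw i)" by auto
    moreover have "card (inversions n u) = Suc (card (inversions n u - {(i, Suc i)}))"
      using h mem2 by (intro card.remove) simp_all
    ultimately show ?thesis using eqc by (simp add: inversion_number_def)
  qed
qed

lemma permutes_neq: "u permutes S \<Longrightarrow> a \<noteq> b \<Longrightarrow> u a \<noteq> u b"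
  by (metis permutes_inj injD)

lemma inversion_number_le_length:
  "set r \<subseteq> {1..<n} \<Longrightarrow> inversion_number n (perm_of_word r) \<le> length r"
proof (induction r rule: rev_induct)
  case Nil then show ?case by (simp only: perm_of_word_Nil inversion_number_id)
next
  case (snoc i r)
  then have i: "1 \<le> i" "i < n" and r: "set r \<subseteq> {1..<n}" by auto
  have p: "perm_of_word r permutes {1..n}" using perm_of_word_permutes[OF r] .
  have ne: "perm_of_word r i \<noteq> perm_of_word r (Suc i)" by (rule permutes_neq[OF p]) simp
  show ?case
  proof (cases "perm_of_word r i < perm_of_word r (Suc i)")
    case True
    then show ?thesis
      using inversion_number_comp_sw(1)[OF p i] snoc.IH[OF r]
      unfolding perm_of_word_snoc length_append_singleton by linarith
  next
    case False
    then have "perm_of_word r (Suc i) < perm_of_word r i" using ne by simp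
    then show ?thesis
      using inversion_number_comp_sw(2)[OF p i] snoc.IH[OF r]
      unfolding perm_of_word_snoc length_append_singleton by linarith
  qed
qed

lemma descent_between:
  fixes u :: "nat \<Rightarrow> 'a::linorder"
  assumes "a < b" "u b < u a"
  shows "\<exists>i. a \<le> i \<and> i < b \<and> u (Suc i) < u i"
  using assms
proof (induction b)
  case 0
  then show ?case by simp
next
  case (Suc b)
  show ?case
  proof (cases "u (Suc b) < u b")
    case True
    then show ?thesis using Suc.prems by (intro exI[of _ b]) auto
  next
    case False
    then have "u b < u a" using Suc.prems(2) by simp
    moreover from this have "a < b" using Suc.prems(1) by (cases "a = b") auto
    ultimately show ?thesis using Suc.IH by (meson less_Suc_eq)
  qed
qed

lemma inversion_number_eq_0_imp_id:
  assumes "u permutes {1..n}" "inversion_number n u = 0"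
  shows "u = id"
proof (rule ccontr)
  assume "u \<noteq> id"
  then have ex: "\<exists>a. u a \<noteq> a" by auto
  define a where "a = (LEAST a. u a \<noteq> a)"
  have ua: "u a \<noteq> a" unfolding a_def by (rule LeastI_ex[OF ex])
  have minim: "\<And>x. x < a \<Longrightarrow> u x = x" unfolding a_def using not_less_Least by blast
  have a_in: "a \<in> {1..n}" using ua permutes_not_in[OF assms(1)] by blast
  have "\<not> u a < a"
  proof
    assume "u a < a"
    then have "u (u a) = u a" by (rule minim)
    then have "u a = a" using permutes_inj[OF assms(1)] by (metis injD)
    with ua show False by simp
  qed
  then have gt: "a < u a" using ua by simp
  define b where "b = inv u a"
  have ub: "u b = a" unfolding b_def using permutes_inverses(1)[OF assms(1)] by simp
  have "b \<noteq> a" using ub ua by auto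
  moreover have "\<not> b < a" using minim ub \<open>b \<noteq> a\<close> by fastforce
  ultimately have ab: "a < b" by simp
  have b_in: "b \<in> {1..n}" using ub a_in permutes_in_image[OF assms(1)] by metis
  have "(a, b) \<in> inversions n u" using ab a_in b_in gt ub by (simp add: inversions_def)
  then have "inversions n u \<noteq> {}" by blast
  then have "inversion_number n u > 0" unfolding inversion_number_def by (simp add: card_gt_0_iff)
  with assms(2) show False by simp
qed

lemma word_of_inversion_length:
  "u permutes {1..n} \<Longrightarrow> \<exists>r. set r \<subseteq> {1..<n} \<and> perm_of_word r = u \<and> length r = inversion_number n u"
proof (induction "inversion_number n u" arbitrary: u)
  case 0
  then have "u = id" using inversion_number_eq_0_imp_id by simp
  then have "set [] \<subseteq> {1..<n} \<and> perm_of_word [] = u \<and> length [] = inversion_number n u"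
    using "0.hyps" by (simp only: perm_of_word_Nil) simp
  then show ?case by blast
next
  case (Suc k)
  then have "inversions n u \<noteq> {}" by (auto simp: inversion_number_def)
  then obtain a b where ab: "a \<in> {1..n}" "b \<in> {1..n}" "a < b" "u b < u a" by (auto simp: inversions_def)
  then obtain i where i: "a \<le> i" "i < b" "u (Suc i) < u i" using descent_between by blast
  have i1: "1 \<le> i" "i < n" using i ab by auto
  define v where "v = u \<circ> sw i"
  have "Suc (inversion_number n v) = inversion_number n u"
    unfolding v_def by (rule inversion_number_comp_sw(2)[OF Suc.prems i1 i(3)])
  then have k: "k = inversion_number n v" using Suc.hyps(2) by simp
  have vp: "v permutes {1..n}"
    unfolding v_def using Suc.prems i1 by (intro permutes_compose permutes_swap_id) auto
  obtain r where r: "set r \<subseteq> {1..<n}" "perm_of_word r = v" "length r = inversion_number n v"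
    using Suc.hyps(1)[OF k vp] by blast
  have "perm_of_word (r @ [i]) = u" using r(2) by (simp add: perm_of_word_snoc v_def o_assoc fun_eq_iff)
  then show ?case using r i1 k Suc.hyps(2) by (intro exI[of _ "r @ [i]"]) auto
qed

lemma reduced_word_iff_length:
  assumes "w permutes {1..n}"
  shows "reduced_word n w r \<longleftrightarrow>
           set r \<subseteq> {1..<n} \<and> perm_of_word r = w \<and> length r = inversion_number n w"
proof
  assume h: "reduced_word n w r"
  obtain r' where r': "set r' \<subseteq> {1..<n}" "perm_of_word r' = w" "length r' = inversion_number n w"
    using word_of_inversion_length[OF assms] by blast
  have "length r \<le> length r'" using h r' unfolding reduced_word_def by blast
  moreover have "inversion_number n w \<le> length r" using h inversion_number_le_length unfolding reduced_word_def by blast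
  ultimately show "set r \<subseteq> {1..<n} \<and> perm_of_word r = w \<and> length r = inversion_number n w"
    using h r' unfolding reduced_word_def by auto
next
  assume "set r \<subseteq> {1..<n} \<and> perm_of_word r = w \<and> length r = inversion_number n w"
  then show "reduced_word n w r" unfolding reduced_word_def using inversion_number_le_length by fastforce
qed

lemma reduced_word_someI: "w permutes {1..n} \<Longrightarrow> reduced_word n w (SOME r. reduced_word n w r)"
  by (rule someI_ex) (use word_of_inversion_length reduced_word_iff_length in blast)

lemma reduced_word_snocD:
  assumes "reduced_word n w (r @ [i])" "w permutes {1..n}"
  shows "reduced_word n (perm_of_word r) r" "perm_of_word r i < perm_of_word r (Suc i)"
proof -
  have h: "set (r @ [i]) \<subseteq> {1..<n}" "perm_of_word (r @ [i]) = w"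
      "length (r @ [i]) = inversion_number n w"
    using assms reduced_word_iff_length by auto
  have r: "set r \<subseteq> {1..<n}" and i: "1 \<le> i" "i < n" using h by auto
  have p: "perm_of_word r permutes {1..n}" using perm_of_word_permutes[OF r] .
  have w: "w = perm_of_word r \<circ> sw i" using h by (simp add: perm_of_word_snoc)
  have le: "inversion_number n (perm_of_word r) \<le> length r" using inversion_number_le_length[OF r] .
  have ne: "perm_of_word r i \<noteq> perm_of_word r (Suc i)" by (rule permutes_neq[OF p]) simp
  show lt: "perm_of_word r i < perm_of_word r (Suc i)"
  proof (rule ccontr)
    assume "\<not> ?thesis"
    then have "perm_of_word r (Suc i) < perm_of_word r i" using ne by simp
    from inversion_number_comp_sw(2)[OF p i this]
    have "Suc (inversion_number n w) = inversion_number n (perm_of_word r)" by (simp add: w)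
    with le h(3) show False by simp
  qed
  have "inversion_number n w = Suc (inversion_number n (perm_of_word r))"
    using inversion_number_comp_sw(1)[OF p i lt] by (simp add: w)
  then have "length r = inversion_number n (perm_of_word r)" using h(3) by simp
  then show "reduced_word n (perm_of_word r) r" using reduced_word_iff_length[OF p] r by simp
qed

lemma reduced_word_snoc_ascent:
  assumes "reduced_word n w r" "w permutes {1..n}" "1 \<le> i" "i < n" "w i < w (Suc i)"
  shows "reduced_word n (w \<circ> sw i) (r @ [i])"
proof -
  have wp: "w \<circ> sw i permutes {1..n}"
    using assms(2-4) by (intro permutes_compose permutes_swap_id) auto
  have "inversion_number n (w \<circ> sw i) = Suc (inversion_number n w)"
    by (rule inversion_number_comp_sw(1)[OF assms(2-5)])
  then show ?thesis
    using assms(1,3,4) reduced_word_iff_length[OF assms(2)] reduced_word_iff_length[OF wp]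
    by (auto simp: perm_of_word_snoc)
qed

definition cycle_perm :: "nat \<Rightarrow> nat \<Rightarrow> nat \<Rightarrow> nat" where
  "cycle_perm m p = perm_of_word [p..<m]"

lemma cycle_perm_eq:
  "p \<le> m \<Longrightarrow> cycle_perm m p = (\<lambda>a. if p \<le> a \<and> a < m then Suc a else if a = m then p else a)"
proof (induction m)
  case 0 then show ?case by (simp add: cycle_perm_def fun_eq_iff)
next
  case (Suc m)
  show ?case
  proof (cases "p = Suc m")
    case True then show ?thesis by (simp add: cycle_perm_def fun_eq_iff)
  next
    case False
    then have pm: "p \<le> m" using Suc.prems by simp
    have "cycle_perm (Suc m) p = cycle_perm m p \<circ> sw m"
      unfolding cycle_perm_def using pm by (simp add: perm_of_word_snoc)
    then show ?thesis using Suc.IH[OF pm] pm by (auto simp: transpose_def fun_eq_iff)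
  qed
qed

lemma cycle_perm_apply:
  "p \<le> m \<Longrightarrow> cycle_perm m p a = (if p \<le> a \<and> a < m then Suc a else if a = m then p else a)"
  by (simp add: cycle_perm_eq)

lemma cycle_perm_permutes: "1 \<le> p \<Longrightarrow> cycle_perm m p permutes {1..m}"
  unfolding cycle_perm_def by (rule perm_of_word_permutes) auto

text \<open>With \<open>p = v\<^sup>-\<^sup>1 (m + 1)\<close>, the permutation \<open>v \<circ> s\<^sub>p \<circ> \<dots> \<circ> s\<^sub>m\<close> fixes \<open>m + 1\<close>, so
  a word for \<open>v\<close> is a word for it followed by \<open>s\<^sub>m \<dots> s\<^sub>p\<close>.\<close>

fun canonical_word :: "nat \<Rightarrow> (nat \<Rightarrow> nat) \<Rightarrow> nat list" where
  "canonical_word 0 v = []"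
| "canonical_word (Suc m) v =
     canonical_word m (v \<circ> cycle_perm (Suc m) (inv v (Suc m))) @ rev [inv v (Suc m)..<Suc m]"

declare canonical_word.simps(2)[simp del]

lemma permutes_shrink:
  assumes "v permutes {1..Suc m}" "v (Suc m) = Suc m"
  shows "v permutes {1..m}"
  by (rule permutes_superset[OF assms(1)]) (use assms(2) in \<open>auto simp: le_Suc_eq\<close>)

definition top_preimage :: "nat \<Rightarrow> (nat \<Rightarrow> nat) \<Rightarrow> nat" where
  "top_preimage m v = inv v (Suc m)"

context
  fixes m v
  assumes vp: "v permutes {1..Suc m}"
begin

lemma top_preimage_props:
  "v (top_preimage m v) = Suc m" "1 \<le> top_preimage m v" "top_preimage m v \<le> Suc m"
proof -
  show v: "v (top_preimage m v) = Suc m"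
    unfolding top_preimage_def using permutes_inverses(1)[OF vp] .
  have "top_preimage m v \<in> {1..Suc m}" using v permutes_in_image[OF vp, of "top_preimage m v"] by auto
  then show "1 \<le> top_preimage m v" "top_preimage m v \<le> Suc m" by auto
qed

lemma comp_cycle_perm_permutes: "v \<circ> cycle_perm (Suc m) (top_preimage m v) permutes {1..m}"
proof (rule permutes_shrink)
  show "v \<circ> cycle_perm (Suc m) (top_preimage m v) permutes {1..Suc m}"
    using cycle_perm_permutes[OF top_preimage_props(2)] vp by (rule permutes_compose)
  show "(v \<circ> cycle_perm (Suc m) (top_preimage m v)) (Suc m) = Suc m"
    using top_preimage_props by (simp add: cycle_perm_apply)
qed

end

lemma canonical_word_Suc:
  "canonical_word (Suc m) v =
     canonical_word m (v \<circ> cycle_perm (Suc m) (top_preimage m v)) @ rev [top_preimage m v..<Suc m]"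
  by (simp only: top_preimage_def canonical_word.simps(2))

lemma canonical_word_letters_bound:
  "v permutes {1..m} \<Longrightarrow> set (canonical_word m v) \<subseteq> {1..<m}"
proof (induction m arbitrary: v)
  case 0 then show ?case by simp
next
  case (Suc m)
  have "set (canonical_word m (v \<circ> cycle_perm (Suc m) (top_preimage m v))) \<subseteq> {1..<m}"
    by (rule Suc.IH[OF comp_cycle_perm_permutes[OF Suc.prems]])
  then show ?case using canonical_word_Suc top_preimage_props(2)[OF Suc.prems] by auto
qed

lemma canonical_word_id: "canonical_word m id = []"
proof (induction m)
  case 0 then show ?case by simp
next
  case (Suc m)
  have "cycle_perm (Suc m) (Suc m) = id" by (simp add: cycle_perm_def)
  moreover have "inv id (Suc m) = Suc m" by simp
  ultimately show ?case using Suc by (simp add: canonical_word.simps(2))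
qed

inductive braid_equiv :: "nat \<Rightarrow> nat list \<Rightarrow> nat list \<Rightarrow> bool" for n where
  brefl: "braid_equiv n r r"
| bsym: "braid_equiv n r r' \<Longrightarrow> braid_equiv n r' r"
| btrans: "braid_equiv n r r' \<Longrightarrow> braid_equiv n r' r'' \<Longrightarrow> braid_equiv n r r''"
| bcomm: "set xs \<subseteq> {1..<n} \<Longrightarrow> set ys \<subseteq> {1..<n} \<Longrightarrow> 1 \<le> i \<Longrightarrow> j < n \<Longrightarrow> Suc i < j \<Longrightarrow>
    braid_equiv n (xs @ [i, j] @ ys) (xs @ [j, i] @ ys)"
| bbraid: "set xs \<subseteq> {1..<n} \<Longrightarrow> set ys \<subseteq> {1..<n} \<Longrightarrow> 1 \<le> i \<Longrightarrow> Suc i < n \<Longrightarrow>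
    braid_equiv n (xs @ [i, Suc i, i] @ ys) (xs @ [Suc i, i, Suc i] @ ys)"

declare braid_equiv.btrans[trans]

lemma braid_equiv_context:
  assumes "braid_equiv n r r'" "set xs \<subseteq> {1..<n}" "set ys \<subseteq> {1..<n}"
  shows "braid_equiv n (xs @ r @ ys) (xs @ r' @ ys)"
  using assms(1)
proof (induction rule: braid_equiv.induct)
  case (brefl r)
  then show ?case by (rule braid_equiv.brefl)
next
  case (bsym r r')
  show ?case using bsym.IH by (rule braid_equiv.bsym)
next
  case (btrans r r' r'')
  show ?case using btrans.IH by (rule braid_equiv.btrans)
next
  case (bcomm xs' ys' i j)
  have "braid_equiv n ((xs @ xs') @ [i, j] @ (ys' @ ys)) ((xs @ xs') @ [j, i] @ (ys' @ ys))"
    by (rule braid_equiv.bcomm) (use bcomm assms in auto)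
  then show ?case by simp
next
  case (bbraid xs' ys' i)
  have "braid_equiv n ((xs @ xs') @ [i, Suc i, i] @ (ys' @ ys)) ((xs @ xs') @ [Suc i, i, Suc i] @ (ys' @ ys))"
    by (rule braid_equiv.bbraid) (use bbraid assms in auto)
  then show ?case by simp
qed

lemma braid_equiv_append_left:
  "braid_equiv n r r' \<Longrightarrow> set xs \<subseteq> {1..<n} \<Longrightarrow> braid_equiv n (xs @ r) (xs @ r')"
  using braid_equiv_context[of n r r' xs "[]"] by simp

lemma braid_equiv_append_right:
  "braid_equiv n r r' \<Longrightarrow> set ys \<subseteq> {1..<n} \<Longrightarrow> braid_equiv n (r @ ys) (r' @ ys)"
  using braid_equiv_context[of n r r' "[]" ys] by simp

lemma braid_equiv_set: "braid_equiv n r r' \<Longrightarrow> set r = set r'"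
  by (induction rule: braid_equiv.induct) auto

lemma braid_equiv_commute_past:
  assumes "set ys \<subseteq> {1..<n}" "1 \<le> i" "i < n" "\<forall>y\<in>set ys. Suc y < i \<or> Suc i < y"
  shows "braid_equiv n (ys @ [i]) (i # ys)"
  using assms
proof (induction ys)
  case Nil
  then show ?case by (simp add: braid_equiv.brefl)
next
  case (Cons y ys)
  have "(y # ys) @ [i] = [y] @ (ys @ [i])"
    by simp
  also have "braid_equiv n \<dots> ([y] @ (i # ys))"
    by (rule braid_equiv_append_left) (use Cons in auto)
  also have "\<dots> = [] @ [y, i] @ ys"
    by simp
  also have "braid_equiv n \<dots> ([] @ [i, y] @ ys)"
  proof (cases "Suc y < i")
    case True
    show ?thesis by (rule braid_equiv.bcomm) (use Cons.prems True in auto)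
  next
    case False
    then have "Suc i < y" using Cons.prems by auto
    show ?thesis by (rule braid_equiv.bsym, rule braid_equiv.bcomm) (use Cons.prems \<open>Suc i < y\<close> in auto)
  qed
  also have "\<dots> = i # y # ys"
    by simp
  finally show ?case .
qed

lemma braid_equiv_descending_past:
  assumes "1 \<le> p" "p \<le> k" "Suc k < M" "M \<le> n"
  shows "braid_equiv n (rev [p..<M] @ [Suc k]) (k # rev [p..<M])"
proof -
  define A where "A = rev [Suc (Suc k)..<M]"
  define B where "B = rev [p..<k]"
  have "[p..<M] = [p..<k] @ [k..<M]"
    using assms upt_add_eq_append[of p k "M - k"] by simp
  also have "[k..<M] = k # Suc k # [Suc (Suc k)..<M]"
    using assms by (simp add: upt_conv_Cons)
  finally have split: "rev [p..<M] = A @ [Suc k, k] @ B"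
    unfolding A_def B_def by simp
  have A: "set A \<subseteq> {1..<n}" "\<forall>y\<in>set A. Suc k < y" unfolding A_def using assms by auto
  have B: "set B \<subseteq> {1..<n}" "\<forall>y\<in>set B. Suc y < Suc k" unfolding B_def using assms by auto
  have "rev [p..<M] @ [Suc k] = (A @ [Suc k, k]) @ (B @ [Suc k])"
    by (simp add: split)
  also have "braid_equiv n \<dots> ((A @ [Suc k, k]) @ (Suc k # B))"
    by (rule braid_equiv_append_left, rule braid_equiv_commute_past) (use A B assms in auto)
  also have "\<dots> = A @ [Suc k, k, Suc k] @ B"
    by simp
  also have "braid_equiv n \<dots> (A @ [k, Suc k, k] @ B)"
    by (rule braid_equiv.bsym, rule braid_equiv.bbraid) (use A B assms in auto)
  also have "\<dots> = (A @ [k]) @ ([Suc k, k] @ B)"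
    by simp
  also have "braid_equiv n \<dots> ((k # A) @ ([Suc k, k] @ B))"
    by (rule braid_equiv_append_right, rule braid_equiv_commute_past) (use A B assms in auto)
  also have "\<dots> = k # rev [p..<M]"
    by (simp add: split)
  finally show ?thesis .
qed

lemma cycle_perm_below:
  assumes "Suc i < p" "p \<le> M"
  shows "sw i p = p" "(v \<circ> sw i) \<circ> cycle_perm M p = (v \<circ> cycle_perm M p) \<circ> sw i"
    "cycle_perm M p i = i" "cycle_perm M p (Suc i) = Suc i"
  using assms by (auto simp: fun_eq_iff cycle_perm_apply transpose_def)

lemma sw_cycle_perm_start: "Suc i \<le> M \<Longrightarrow> sw i (cycle_perm M i a) = cycle_perm M (Suc i) a"
  by (auto simp add: cycle_perm_apply transpose_def)

lemma cycle_perm_inside: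
  assumes "p \<le> k" "Suc k < M"
  shows "sw (Suc k) p = p" "(v \<circ> sw (Suc k)) \<circ> cycle_perm M p = (v \<circ> cycle_perm M p) \<circ> sw k"
    "cycle_perm M p k = Suc k" "cycle_perm M p (Suc k) = Suc (Suc k)"
  using assms by (auto simp: fun_eq_iff cycle_perm_apply transpose_def)

lemma top_preimage_comp_sw:
  assumes "v permutes {1..Suc m}" "1 \<le> i" "i < Suc m"
  shows "top_preimage m (v \<circ> sw i) = sw i (top_preimage m v)"
proof -
  have up: "v \<circ> sw i permutes {1..Suc m}"
    using assms by (intro permutes_compose permutes_swap_id) auto
  have "(v \<circ> sw i) (sw i (top_preimage m v)) = Suc m" using top_preimage_props(1)[OF assms(1)] by simp
  then show ?thesis unfolding top_preimage_def using permutes_inv_eq[OF up] by blast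
qed

lemma canonical_word_Suc_snoc:
  assumes vp: "v permutes {1..Suc m}" and "Suc m \<le> n" "1 \<le> i" "i < Suc m"
    and p: "p = top_preimage m v" and v': "v' = v \<circ> cycle_perm (Suc m) p"
    and swp: "sw i p = p" and comp: "(v \<circ> sw i) \<circ> cycle_perm (Suc m) p = v' \<circ> sw j"
    and IH: "braid_equiv n (canonical_word m v' @ [j]) (canonical_word m (v' \<circ> sw j))"
    and past: "braid_equiv n (rev [p..<Suc m] @ [i]) (j # rev [p..<Suc m])"
  shows "braid_equiv n (canonical_word (Suc m) v @ [i]) (canonical_word (Suc m) (v \<circ> sw i))"
proof -
  have v'p: "v' permutes {1..m}" unfolding v' p by (rule comp_cycle_perm_permutes[OF vp])
  have letters: "set (canonical_word m v') \<subseteq> {1..<n}" "set (rev [p..<Suc m]) \<subseteq> {1..<n}"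
    using canonical_word_letters_bound[OF v'p] top_preimage_props(2)[OF vp] assms(2) by (auto simp: p)
  have "canonical_word (Suc m) v @ [i] = canonical_word m v' @ (rev [p..<Suc m] @ [i])"
    by (simp add: canonical_word_Suc p v')
  also have "braid_equiv n \<dots> (canonical_word m v' @ (j # rev [p..<Suc m]))"
    by (rule braid_equiv_append_left[OF past letters(1)])
  also have "\<dots> = (canonical_word m v' @ [j]) @ rev [p..<Suc m]"
    by simp
  also have "braid_equiv n \<dots> (canonical_word m (v' \<circ> sw j) @ rev [p..<Suc m])"
    by (rule braid_equiv_append_right[OF IH letters(2)])
  also have "\<dots> = canonical_word m ((v \<circ> sw i) \<circ> cycle_perm (Suc m) p) @ rev [p..<Suc m]"
    by (simp only: comp)
  also have "\<dots> = canonical_word (Suc m) (v \<circ> sw i)"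
    by (simp only: canonical_word_Suc top_preimage_comp_sw[OF vp assms(3,4)] p[symmetric] swp)
  finally show ?thesis .
qed

lemma top_preimage_not_ascent:
  assumes vp: "v permutes {1..Suc m}" and "i < Suc m" "v i < v (Suc i)"
  shows "i \<noteq> top_preimage m v"
proof
  assume "i = top_preimage m v"
  then have "v i = Suc m" using top_preimage_props(1)[OF vp] by simp
  moreover have "v (Suc i) \<le> Suc m" using permutes_in_image[OF vp, of "Suc i"] assms(2) by simp
  ultimately show False using assms(3) by simp
qed

lemma canonical_word_comp_sw_start:
  assumes vp: "v permutes {1..Suc m}" and "1 \<le> i" "i < Suc m" and start: "Suc i = top_preimage m v"
  shows "canonical_word (Suc m) (v \<circ> sw i) = canonical_word (Suc m) v @ [i]"
proof -
  define p where "p = top_preimage m v"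
  have swp: "sw i p = i" using start by (simp add: p_def transpose_def)
  have comp: "(v \<circ> sw i) \<circ> cycle_perm (Suc m) i = v \<circ> cycle_perm (Suc m) p"
    unfolding p_def start[symmetric] using assms(3) by (simp add: fun_eq_iff sw_cycle_perm_start)
  have "rev [i..<Suc m] = rev [p..<Suc m] @ [i]"
    using assms(3) start by (simp add: p_def upt_conv_Cons)
  then show ?thesis
    by (simp only: canonical_word_Suc top_preimage_comp_sw[OF vp assms(2,3)] p_def[symmetric]
        swp comp append_assoc)
qed

lemma canonical_word_snoc_ascent:
  "m \<le> n \<Longrightarrow> v permutes {1..m} \<Longrightarrow> 1 \<le> i \<Longrightarrow> i < m \<Longrightarrow> v i < v (Suc i) \<Longrightarrow>
   braid_equiv n (canonical_word m v @ [i]) (canonical_word m (v \<circ> sw i))"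
proof (induction m arbitrary: v i)
  case 0
  then show ?case by simp
next
  case (Suc m)
  note vp = Suc.prems(2)
  define p where "p = top_preimage m v"
  define v' where "v' = v \<circ> cycle_perm (Suc m) p"
  have p: "v p = Suc m" "1 \<le> p" "p \<le> Suc m" using top_preimage_props[OF vp] by (auto simp: p_def)
  have v'p: "v' permutes {1..m}" unfolding v'_def p_def by (rule comp_cycle_perm_permutes[OF vp])
  have "i \<noteq> p"
    unfolding p_def by (rule top_preimage_not_ascent[OF vp Suc.prems(4,5)])
  then consider (below) "Suc i < p" | (start) "Suc i = p" | (above) "p < i"
    by linarith
  then show ?case
  proof cases
    case below
    note c = cycle_perm_below[OF below p(3)]
    have "v' i = v i" "v' (Suc i) = v (Suc i)" by (simp_all add: v'_def c)
    then have IH: "braid_equiv n (canonical_word m v' @ [i]) (canonical_word m (v' \<circ> sw i))"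
      using Suc.prems below p by (intro Suc.IH[OF _ v'p]) auto
    have past: "braid_equiv n (rev [p..<Suc m] @ [i]) (i # rev [p..<Suc m])"
      by (rule braid_equiv_commute_past) (use Suc.prems below in auto)
    show ?thesis
      by (rule canonical_word_Suc_snoc[OF vp _ _ _ p_def v'_def _ _ IH past])
         (use Suc.prems c(1) c(2)[of v] in \<open>simp_all add: v'_def\<close>)
  next
    case start
    then have "canonical_word (Suc m) (v \<circ> sw i) = canonical_word (Suc m) v @ [i]"
      by (intro canonical_word_comp_sw_start[OF vp Suc.prems(3,4)]) (simp add: p_def)
    then show ?thesis by (simp only: braid_equiv.brefl)
  next
    case above
    then obtain k where k: "i = Suc k" "p \<le> k" by (cases i) auto
    have "Suc k < Suc m" using k Suc.prems(4) by simp
    note c = cycle_perm_inside[OF k(2) this]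
    have "v' k = v i" "v' (Suc k) = v (Suc i)" by (simp_all add: v'_def c k(1))
    then have IH: "braid_equiv n (canonical_word m v' @ [k]) (canonical_word m (v' \<circ> sw k))"
      using Suc.prems k p by (intro Suc.IH[OF _ v'p]) auto
    have past: "braid_equiv n (rev [p..<Suc m] @ [i]) (k # rev [p..<Suc m])"
      unfolding k(1) by (rule braid_equiv_descending_past) (use p k Suc.prems in auto)
    show ?thesis
      by (rule canonical_word_Suc_snoc[OF vp _ _ _ p_def v'_def _ _ IH past])
         (use Suc.prems c(1) c(2)[of v] k(1) in \<open>simp_all add: v'_def\<close>)
  qed
qed

lemma reduced_word_braid_equiv_canonical:
  "w permutes {1..n} \<Longrightarrow> reduced_word n w r \<Longrightarrow> braid_equiv n r (canonical_word n w)"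
proof (induction r arbitrary: w rule: rev_induct)
  case Nil
  then have "w = id" unfolding reduced_word_def by simp
  then show ?case by (simp only: canonical_word_id) (rule braid_equiv.brefl)
next
  case (snoc i r)
  define u where "u = perm_of_word r"
  have red: "reduced_word n u r" and asc: "u i < u (Suc i)"
    using reduced_word_snocD[OF snoc.prems(2,1)] by (auto simp: u_def)
  have letters: "set (r @ [i]) \<subseteq> {1..<n}" and w: "w = u \<circ> sw i"
    using snoc.prems unfolding reduced_word_def by (auto simp: u_def perm_of_word_snoc)
  have up: "u permutes {1..n}" unfolding u_def using letters by (intro perm_of_word_permutes) auto
  have "braid_equiv n (r @ [i]) (canonical_word n u @ [i])"
    by (rule braid_equiv_append_right[OF snoc.IH[OF up red]]) (use letters in auto)
  also have "braid_equiv n \<dots> (canonical_word n (u \<circ> sw i))"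
    by (rule canonical_word_snoc_ascent) (use up letters asc in auto)
  finally show ?case by (simp only: w)
qed

definition joined :: "nat set \<Rightarrow> nat \<Rightarrow> nat \<Rightarrow> bool" where
  "joined J a b = (\<forall>k. min a b \<le> k \<and> k < max a b \<longrightarrow> k \<in> J)"

lemma joined_refl[simp]: "joined J a a"
  by (auto simp: joined_def)

lemma joined_sym: "joined J a b = joined J b a"
  by (simp add: joined_def min.commute max.commute)

lemma joined_Suc: "joined J i (Suc i) \<longleftrightarrow> i \<in> J"
proof -
  have "min i (Suc i) \<le> k \<and> k < max i (Suc i) \<longleftrightarrow> k = i" for k
    by auto
  then show ?thesis by (simp add: joined_def)
qed

lemma joined_mono: "J \<subseteq> J' \<Longrightarrow> joined J a b \<Longrightarrow> joined J' a b"
  unfolding joined_def by blast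

lemma joined_trans: "joined J a b \<Longrightarrow> joined J b c \<Longrightarrow> joined J a c"
proof -
  assume h1: "joined J a b" and h2: "joined J b c"
  show "joined J a c" unfolding joined_def
  proof (intro allI impI)
    fix k assume k: "min a c \<le> k \<and> k < max a c"
    have "(min a b \<le> k \<and> k < max a b) \<or> (min b c \<le> k \<and> k < max b c)"
      using k by (cases "a \<le> b"; cases "b \<le> c"; cases "a \<le> c") (auto simp: min_def max_def)
    then show "k \<in> J" using h1 h2 unfolding joined_def by blast
  qed
qed

lemma joined_closed_iff:
  assumes closed: "\<And>k. k \<in> J \<Longrightarrow> k \<in> B \<longleftrightarrow> Suc k \<in> B" and "joined J a b"
  shows "a \<in> B \<longleftrightarrow> b \<in> B"
proof -
  have "a \<in> B \<longleftrightarrow> b \<in> B" if "joined J a b" "a \<le> b" for a b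
    using that
  proof (induction b)
    case 0
    then show ?case by simp
  next
    case (Suc b)
    show ?case
    proof (cases "a = Suc b")
      case False
      then have "a \<le> b" "joined J a b" "b \<in> J" using Suc.prems by (auto simp: joined_def)
      then show ?thesis using Suc.IH closed[of b] by blast
    qed simp
  qed
  then show ?thesis using assms(2) joined_sym by (metis nat_le_linear)
qed

lemma canonical_word_letters:
  "v permutes {1..m} \<Longrightarrow> (\<forall>a. joined J a (v a)) \<Longrightarrow> set (canonical_word m v) \<subseteq> J"
proof (induction m arbitrary: v)
  case 0 then show ?case by simp
next
  case (Suc m)
  note vp = Suc.prems(1)
  define p where "p = top_preimage m v"
  define v' where "v' = v \<circ> cycle_perm (Suc m) p"
  have p: "v p = Suc m" "1 \<le> p" "p \<le> Suc m" using top_preimage_props[OF vp] by (auto simp: p_def)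
  have v'p: "v' permutes {1..m}" unfolding v'_def p_def by (rule comp_cycle_perm_permutes[OF vp])
  have cp: "joined J p (Suc m)" using Suc.prems(2) p by metis
  then have rng: "{p..<Suc m} \<subseteq> J" using p unfolding joined_def by auto
  have "joined J a (v' a)" for a
  proof (cases "p \<le> a \<and> a < Suc m")
    case True
    then have "v' a = v (Suc a)" unfolding v'_def using p by (simp add: cycle_perm_apply)
    moreover have "joined J a (Suc a)" using True rng unfolding joined_def by auto
    ultimately show ?thesis using Suc.prems(2) joined_trans by metis
  next
    case False
    show ?thesis
    proof (cases "a = Suc m")
      case True
      then have "v' a = Suc m" unfolding v'_def using p False by (simp add: cycle_perm_apply)
      then show ?thesis using True by simp
    next
      case False2: False
      then have "v' a = v a" unfolding v'_def using p False False2 by (auto simp: cycle_perm_apply)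
      then show ?thesis using Suc.prems(2) by metis
    qed
  qed
  then have "set (canonical_word m v') \<subseteq> J" using Suc.IH[OF v'p] by blast
  then show ?case using canonical_word_Suc rng by (auto simp: v'_def p_def)
qed

lemma reduced_word_letters:
  "w permutes {1..n} \<Longrightarrow> (\<forall>a. joined J a (w a)) \<Longrightarrow> reduced_word n w r \<Longrightarrow> set r \<subseteq> J"
  using reduced_word_braid_equiv_canonical braid_equiv_set canonical_word_letters by metis

section \<open>Linear partitions and link sets\<close>

definition links :: "nat set set \<Rightarrow> nat set" where
  "links P = {i. \<exists>B\<in>P. i \<in> B \<and> Suc i \<in> B}"

definition joined_rel :: "nat \<Rightarrow> nat set \<Rightarrow> (nat \<times> nat) set" where
  "joined_rel n J = {(a,b). a \<in> {1..n} \<and> b \<in> {1..n} \<and> joined J a b}"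

lemma equiv_joined_rel: "equiv {1..n} (joined_rel n J)"
  unfolding equiv_def refl_on_def sym_def trans_def joined_rel_def
  using joined_sym joined_trans by auto

lemma E_word_eq_links: "E_word n P = map Eg (filter (\<lambda>i. i \<in> links P) [1..<n])"
proof -
  have "[Eg i. i \<leftarrow> xs, \<exists>B\<in>P. i \<in> B \<and> Suc i \<in> B] = map Eg (filter (\<lambda>i. i \<in> links P) xs)" for xs
    by (induction xs) (auto simp: links_def)
  then show ?thesis by (simp add: E_word_def)
qed

definition young_of_links :: "nat \<Rightarrow> nat set \<Rightarrow> (nat \<Rightarrow> nat) set" where
  "young_of_links n J = {w. w permutes {1..n} \<and> (\<forall>a. joined J a (w a))}"

context
  fixes n P
  assumes P: "P \<in> LP n"
begin

lemma LP_partition_on: "partition_on {1..n} P"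
  using P by (simp add: LP_def)

lemma LP_block_interval: "B \<in> P \<Longrightarrow> \<exists>x y. B = {x..y}"
  using P by (simp add: LP_def)

lemma LP_block_unique: "B \<in> P \<Longrightarrow> B' \<in> P \<Longrightarrow> k \<in> B \<Longrightarrow> k \<in> B' \<Longrightarrow> B = B'"
  using partition_onD2[OF LP_partition_on] unfolding disjoint_def by auto

lemma links_subset: "links P \<subseteq> {1..<n}"
proof
  fix i assume "i \<in> links P"
  then obtain B where "B \<in> P" "i \<in> B" "Suc i \<in> B" by (auto simp: links_def)
  then have "i \<in> {1..n}" "Suc i \<in> {1..n}" using partition_onD1[OF LP_partition_on] by auto
  then show "i \<in> {1..<n}" by auto
qed

lemma block_joined: "B \<in> P \<Longrightarrow> a \<in> B \<Longrightarrow> b \<in> B \<Longrightarrow> joined (links P) a b"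
proof -
  assume B: "B \<in> P" "a \<in> B" "b \<in> B"
  obtain x y where xy: "B = {x..y}" using LP_block_interval[OF B(1)] by blast
  show ?thesis unfolding joined_def links_def
  proof (intro allI impI)
    fix k assume "min a b \<le> k \<and> k < max a b"
    then have "k \<in> B" "Suc k \<in> B" using B(2,3) xy by auto
    then show "k \<in> {i. \<exists>B\<in>P. i \<in> B \<and> Suc i \<in> B}" using B(1) by blast
  qed
qed

lemma block_link_iff: "B \<in> P \<Longrightarrow> k \<in> links P \<Longrightarrow> (k \<in> B \<longleftrightarrow> Suc k \<in> B)"
proof -
  assume B: "B \<in> P" and k: "k \<in> links P"
  then obtain B' where B': "B' \<in> P" "k \<in> B'" "Suc k \<in> B'" by (auto simp: links_def)
  show ?thesis using LP_block_unique[OF B(1) B'(1)] B' by blast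
qed

lemma joined_block: "B \<in> P \<Longrightarrow> a \<in> B \<Longrightarrow> joined (links P) a b \<Longrightarrow> b \<in> B"
  using joined_closed_iff[OF block_link_iff] by blast

lemma LP_eq_quotient_links: "P = {1..n} // joined_rel n (links P)"
proof -
  have "{(x, y). \<exists>p\<in>P. x \<in> p \<and> y \<in> p} = joined_rel n (links P)"
  proof (rule set_eqI, rule iffI)
    fix z assume "z \<in> {(x, y). \<exists>p\<in>P. x \<in> p \<and> y \<in> p}"
    then obtain x y B where z: "z = (x,y)" "B \<in> P" "x \<in> B" "y \<in> B" by auto
    then have "x \<in> {1..n}" "y \<in> {1..n}" using partition_onD1[OF LP_partition_on] by auto
    then show "z \<in> joined_rel n (links P)"
      using block_joined[OF z(2-4)] z(1) by (simp add: joined_rel_def)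
  next
    fix z assume "z \<in> joined_rel n (links P)"
    then obtain x y where z: "z = (x,y)" "x \<in> {1..n}" "y \<in> {1..n}" "joined (links P) x y"
      by (auto simp: joined_rel_def)
    then have "x \<in> \<Union>P" using partition_onD1[OF LP_partition_on] by auto
    then obtain B where "B \<in> P" "x \<in> B" by blast
    then show "z \<in> {(x, y). \<exists>p\<in>P. x \<in> p \<and> y \<in> p}" using joined_block z by auto
  qed
  then show ?thesis using partition_on_eq_quotient[OF LP_partition_on] by simp
qed

lemma young_eq_young_of_links: "young n P = young_of_links n (links P)"
proof (intro set_eqI iffI)
  fix w assume w: "w \<in> young n P"
  then have wp: "w permutes {1..n}" by (simp add: young_def)
  have "joined (links P) a (w a)" for a
  proof (cases "a \<in> {1..n}")
    case True
    then have "a \<in> \<Union>P" using partition_onD1[OF LP_partition_on] by auto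
    then obtain B where B: "B \<in> P" "a \<in> B" by blast
    then have "w a \<in> B" using w by (auto simp: young_def)
    then show ?thesis using block_joined B by blast
  next
    case False
    then show ?thesis using permutes_not_in[OF wp] by simp
  qed
  then show "w \<in> young_of_links n (links P)" using wp by (simp add: young_of_links_def)
next
  fix w assume "w \<in> young_of_links n (links P)"
  then have wp: "w permutes {1..n}" and w: "\<forall>a. joined (links P) a (w a)"
    by (auto simp: young_of_links_def)
  have "w ` B = B" if B: "B \<in> P" for B
  proof (rule endo_inj_surj)
    have "B \<subseteq> {1..n}" using B partition_onD1[OF LP_partition_on] by auto
    then show "finite B" by (rule finite_subset) simp
    show "w ` B \<subseteq> B" using joined_block[OF B] w by blast
    show "inj_on w B" using permutes_inj_on wp by blast
  qed
  then show "w \<in> young n P" using wp by (simp add: young_def)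
qed

end

lemma links_inj: "P \<in> LP n \<Longrightarrow> P' \<in> LP n \<Longrightarrow> links P = links P' \<Longrightarrow> P = P'"
  using LP_eq_quotient_links by metis

lemma joined_class_interval:
  assumes J: "J \<subseteq> {1..<n}" and a: "a \<in> {1..n}"
  shows "\<exists>x y. joined_rel n J `` {a} = {x..y}"
proof -
  define X where "X = joined_rel n J `` {a}"
  have aX: "a \<in> X" using a by (simp add: X_def joined_rel_def)
  have fin: "finite X" by (rule finite_subset[of _ "{1..n}"]) (auto simp: X_def joined_rel_def)
  have ne: "X \<noteq> {}" using aX by auto
  have X: "X = {b. b \<in> {1..n} \<and> joined J a b}" using a by (auto simp: X_def joined_rel_def)
  have "X = {Min X..Max X}"
  proof
    show "X \<subseteq> {Min X..Max X}" using fin by auto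
    show "{Min X..Max X} \<subseteq> X"
    proof
      fix x assume x: "x \<in> {Min X..Max X}"
      have mi: "Min X \<in> X" "Max X \<in> X" using fin ne by auto
      have am: "Min X \<le> a" "a \<le> Max X" using fin aX by auto
      have c1: "joined J a (Min X)" "joined J a (Max X)" using mi X by auto
      have "joined J a x" unfolding joined_def
      proof (intro allI impI)
        fix k assume "min a x \<le> k \<and> k < max a x"
        then have "(min a (Min X) \<le> k \<and> k < max a (Min X)) \<or>
            (min a (Max X) \<le> k \<and> k < max a (Max X))"
          using x am by auto
        then show "k \<in> J" using c1 unfolding joined_def by blast
      qed
      moreover have "x \<in> {1..n}" using x mi X by auto
      ultimately show "x \<in> X" using X by auto
    qed
  qed
  then show ?thesis unfolding X_def by blast
qed

lemma quotient_joined_rel_LP: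
  assumes J: "J \<subseteq> {1..<n}"
  shows "{1..n} // joined_rel n J \<in> LP n" "links ({1..n} // joined_rel n J) = J"
proof -
  show "{1..n} // joined_rel n J \<in> LP n"
    unfolding LP_def using partition_on_quotient[OF equiv_joined_rel] joined_class_interval[OF J]
    by (auto elim!: quotientE)
  show "links ({1..n} // joined_rel n J) = J"
  proof
    show "links ({1..n} // joined_rel n J) \<subseteq> J"
    proof
      fix i assume "i \<in> links ({1..n} // joined_rel n J)"
      then obtain X where X: "X \<in> {1..n} // joined_rel n J" "i \<in> X" "Suc i \<in> X"
        by (auto simp: links_def)
      then have "(i, Suc i) \<in> joined_rel n J" using in_quotient_imp_in_rel[OF equiv_joined_rel] by blast
      then show "i \<in> J" by (auto simp: joined_rel_def joined_Suc)
    qed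
    show "J \<subseteq> links ({1..n} // joined_rel n J)"
    proof
      fix i assume i: "i \<in> J"
      then have i1: "i \<in> {1..n}" "Suc i \<in> {1..n}" using J by auto
      have "i \<in> joined_rel n J `` {i}" "Suc i \<in> joined_rel n J `` {i}"
        using i i1 by (auto simp: joined_rel_def joined_Suc)
      moreover have "joined_rel n J `` {i} \<in> {1..n} // joined_rel n J" using i1(1) by (rule quotientI)
      ultimately show "i \<in> links ({1..n} // joined_rel n J)" unfolding links_def by blast
    qed
  qed
qed

definition partition_of_links :: "nat \<Rightarrow> nat set \<Rightarrow> nat set set" where
  "partition_of_links n J = {1..n} // joined_rel n J"

lemma partition_of_links_in_LP: "J \<subseteq> {1..<n} \<Longrightarrow> partition_of_links n J \<in> LP n"
  unfolding partition_of_links_def using quotient_joined_rel_LP by auto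

lemma links_partition_of_links: "J \<subseteq> {1..<n} \<Longrightarrow> links (partition_of_links n J) = J"
  unfolding partition_of_links_def using quotient_joined_rel_LP by auto

lemma Gidx_Sigma: "Gidx n = Sigma (LP n) (young n)"
  by (auto simp: Gidx_def)

lemma finite_LP: "finite (LP n)"
  by (rule finite_subset[of _ "Pow (Pow {1..n})"]) (auto simp: LP_def dest: partition_onD1)

lemma finite_young: "finite (young n P)"
  by (rule finite_subset[of _ "{w. w permutes {1..n}}"]) (auto simp: young_def finite_permutations)

lemma finite_Gidx: "finite (Gidx n)"
  by (simp add: Gidx_Sigma finite_LP finite_young)

lemma bij_betw_links_LP: "bij_betw links (LP n) (Pow {1..<n})"
proof (rule bij_betw_imageI)
  show "inj_on links (LP n)" by (rule inj_onI) (rule links_inj)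
  show "links ` LP n = Pow {1..<n}"
  proof
    show "links ` LP n \<subseteq> Pow {1..<n}" using links_subset by blast
    show "Pow {1..<n} \<subseteq> links ` LP n"
    proof
      fix J assume "J \<in> Pow {1..<n}"
      then have "partition_of_links n J \<in> LP n" "links (partition_of_links n J) = J"
        using partition_of_links_in_LP links_partition_of_links by auto
      then show "J \<in> links ` LP n" by (metis image_eqI)
    qed
  qed
qed

lemma young_of_links_mono: "J \<subseteq> J' \<Longrightarrow> young_of_links n J \<subseteq> young_of_links n J'"
  unfolding young_of_links_def using joined_mono by blast

lemma young_of_links_comp_sw:
  assumes "J \<subseteq> {1..<n}" "i \<in> J" "w \<in> young_of_links n J"
  shows "w \<circ> sw i \<in> young_of_links n J"
proof -
  have wp: "w permutes {1..n}" and w: "\<forall>a. joined J a (w a)"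
    using assms(3) by (auto simp: young_of_links_def)
  have "sw i permutes {1..n}" using assms(1,2) by (intro permutes_swap_id) auto
  moreover have "joined J a (sw i a)" for a
    using assms(2) joined_Suc[of J i] by (cases "a = i"; cases "a = Suc i") (auto simp: joined_sym)
  then have "joined J a ((w \<circ> sw i) a)" for a using w joined_trans by (metis comp_apply)
  ultimately show ?thesis using permutes_compose[OF _ wp] by (auto simp: young_of_links_def)
qed

definition E_list :: "nat \<Rightarrow> nat set \<Rightarrow> gen list" where
  "E_list n J = map Eg (filter (\<lambda>i. i \<in> J) [1..<n])"

definition red_word :: "nat \<Rightarrow> (nat \<Rightarrow> nat) \<Rightarrow> nat list" where
  "red_word n w = (SOME r. reduced_word n w r)"

definition basis_word :: "nat \<Rightarrow> nat set \<Rightarrow> (nat \<Rightarrow> nat) \<Rightarrow> gen list" where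
  "basis_word n J w = E_list n J @ map Zg (red_word n w)"

lemma basis_elt_eq: "basis_elt n (P, w) = fa_word (basis_word n (links P) w)"
  by (simp add: basis_elt_def basis_word_def E_word_eq_links E_list_def z_word_def red_word_def)

lemma red_word_props:
  assumes "w \<in> young_of_links n J"
  shows "reduced_word n w (red_word n w)" "set (red_word n w) \<subseteq> J"
proof -
  have wp: "w permutes {1..n}" and w: "\<forall>a. joined J a (w a)"
    using assms by (auto simp: young_of_links_def)
  show r: "reduced_word n w (red_word n w)" unfolding red_word_def by (rule reduced_word_someI[OF wp])
  show "set (red_word n w) \<subseteq> J" by (rule reduced_word_letters[OF wp w r])
qed

section \<open>Linear independence\<close>

type_synonym vec = "nat set \<times> (nat \<Rightarrow> nat) \<Rightarrow> laurent"

fun gen_op :: "gen \<Rightarrow> vec \<Rightarrow> vec" where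
  "gen_op (Eg i) f = (\<lambda>(J,v). if i \<in> J \<and> inj v then f (J,v) else 0)"
| "gen_op (Zg i) f = (\<lambda>(J,v). if i \<in> J \<and> inj v
     then f (J, v \<circ> sw i) + (if v (Suc i) < v i then qdiff * f (J,v) else 0) else 0)"

lemma inj_comp_sw: "inj v \<Longrightarrow> inj (v \<circ> sw i)"
  by (simp add: inj_compose)

lemma gen_op_Eg: "gen_op (Eg i) f (J,v) = (if i \<in> J \<and> inj v then f (J,v) else 0)"
  by simp

lemma gen_op_Zg:
  "gen_op (Zg i) f (J,v) = (if i \<in> J \<and> inj v
     then f (J, v \<circ> sw i) + (if v (Suc i) < v i then qdiff * f (J,v) else 0) else 0)"
  by simp

declare gen_op.simps[simp del]

lemma gen_op_e_idem: "gen_op (Eg i) (gen_op (Eg i) f) = gen_op (Eg i) f"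
  by (intro ext) (simp add: gen_op.simps split: prod.split)

lemma gen_op_e_comm: "gen_op (Eg j) (gen_op (Eg i) f) = gen_op (Eg i) (gen_op (Eg j) f)"
  by (intro ext) (simp add: gen_op.simps split: prod.split)

lemma gen_op_e_z: "gen_op (Zg i) (gen_op (Eg i) f) = gen_op (Zg i) f"
  by (intro ext) (simp add: gen_op.simps inj_comp_sw split: prod.split)

lemma gen_op_e_z_comm: "gen_op (Zg j) (gen_op (Eg i) f) = gen_op (Eg i) (gen_op (Zg j) f)"
  by (intro ext) (auto simp add: gen_op.simps inj_comp_sw split: prod.split)

lemma gen_op_z_square:
  "gen_op (Zg i) (gen_op (Zg i) f) = (\<lambda>p. gen_op (Eg i) f p + qdiff * gen_op (Zg i) f p)"
proof (rule ext)
  fix p :: "nat set \<times> (nat \<Rightarrow> nat)"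
  obtain J v where p: "p = (J, v)" by (cases p)
  show "gen_op (Zg i) (gen_op (Zg i) f) p = gen_op (Eg i) f p + qdiff * gen_op (Zg i) f p"
  proof (cases "i \<in> J \<and> inj v")
    case True
    have ne: "v (Suc i) \<noteq> v i" using True by (metis injD n_not_Suc_n)
    define w where "w = v \<circ> sw i"
    have w: "w (Suc i) = v i" "w i = v (Suc i)" "w \<circ> sw i = v" "inj w"
      unfolding w_def using True by (auto simp: comp_assoc inj_comp_sw)
    have a: "gen_op (Zg i) f (J, w) = f (J, v) + (if v i < v (Suc i) then qdiff * f (J, w) else 0)"
      using True w by (simp add: gen_op_Zg)
    have b: "gen_op (Zg i) f (J, v) = f (J, w) + (if v (Suc i) < v i then qdiff * f (J, v) else 0)"
      using True by (simp add: gen_op_Zg w_def)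
    have c: "gen_op (Zg i) (gen_op (Zg i) f) (J, v) =
        gen_op (Zg i) f (J, w) + (if v (Suc i) < v i then qdiff * gen_op (Zg i) f (J, v) else 0)"
      using True by (subst gen_op_Zg) (simp add: w_def)
    show ?thesis unfolding p c a b using True ne
      by (cases "v (Suc i) < v i") (auto simp: gen_op_Eg algebra_simps)
  next
    case False
    then show ?thesis unfolding p gen_op_Eg gen_op_Zg if_not_P[OF False] by simp
  qed
qed

lemma gen_op_Zg_active:
  "i \<in> J \<Longrightarrow> inj v \<Longrightarrow>
     gen_op (Zg i) f (J,v) = f (J, v \<circ> sw i) + (if v (Suc i) < v i then qdiff * f (J,v) else 0)"
  by (simp add: gen_op_Zg)

lemma gen_op_Zg_unlinked: "i \<notin> J \<Longrightarrow> gen_op (Zg i) f (J,v) = 0"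
  by (simp add: gen_op_Zg)

lemma gen_op_Zg_not_inj: "\<not> inj v \<Longrightarrow> gen_op (Zg i) f (J,v) = 0"
  by (simp add: gen_op_Zg)

lemma comp_sw_braid: "v \<circ> sw i \<circ> sw (Suc i) \<circ> sw i = v \<circ> sw (Suc i) \<circ> sw i \<circ> sw (Suc i)"
  by (simp add: fun_eq_iff transpose_def)

lemma comp_sw_sw: "v \<circ> sw k \<circ> sw k = v"
  by (simp add: comp_assoc)

lemma gen_op_braid_at:
  assumes "i \<in> J" "Suc i \<in> J" "inj v"
  shows "gen_op (Zg i) (gen_op (Zg (Suc i)) (gen_op (Zg i) f)) (J,v) =
           gen_op (Zg (Suc i)) (gen_op (Zg i) (gen_op (Zg (Suc i)) f)) (J,v)"
proof -
  have ne: "v i \<noteq> v (Suc i)" "v i \<noteq> v (Suc (Suc i))" "v (Suc i) \<noteq> v (Suc (Suc i))"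
    using assms(3) by (simp_all add: inj_eq)
  show ?thesis using assms ne
    apply (cases "v i < v (Suc i)"; cases "v (Suc i) < v (Suc (Suc i))"; cases "v i < v (Suc (Suc i))")
    apply (simp_all add: gen_op_Zg_active inj_comp_sw comp_sw_braid comp_sw_sw not_less split del: if_split)
    apply (simp_all add: algebra_simps)
    done
qed

lemma gen_op_braid:
  "gen_op (Zg i) (gen_op (Zg (Suc i)) (gen_op (Zg i) f)) =
     gen_op (Zg (Suc i)) (gen_op (Zg i) (gen_op (Zg (Suc i)) f))"
proof (rule ext)
  fix p :: "nat set \<times> (nat \<Rightarrow> nat)"
  obtain J v where p: "p = (J, v)" by (cases p)
  show "gen_op (Zg i) (gen_op (Zg (Suc i)) (gen_op (Zg i) f)) p =
      gen_op (Zg (Suc i)) (gen_op (Zg i) (gen_op (Zg (Suc i)) f)) p"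
  proof (cases "i \<in> J \<and> Suc i \<in> J \<and> inj v")
    case True
    then show ?thesis unfolding p by (intro gen_op_braid_at) auto
  next
    case False
    then consider "\<not> inj v" | "inj v" "i \<notin> J" | "inj v" "Suc i \<notin> J" by blast
    then show ?thesis
    proof cases
      case 1
      then show ?thesis unfolding p by (simp add: gen_op_Zg_not_inj)
    next
      case 2
      then show ?thesis unfolding p
        by (cases "Suc i \<in> J") (simp_all add: gen_op_Zg_unlinked gen_op_Zg_active inj_comp_sw)
    next
      case 3
      then show ?thesis unfolding p
        by (cases "i \<in> J") (simp_all add: gen_op_Zg_unlinked gen_op_Zg_active inj_comp_sw)
    qed
  qed
qed

lemma gen_op_z_comm:
  assumes "Suc i < j"
  shows "gen_op (Zg j) (gen_op (Zg i) f) = gen_op (Zg i) (gen_op (Zg j) f)"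
proof (rule ext)
  fix p :: "nat set \<times> (nat \<Rightarrow> nat)"
  obtain J v where p: "p = (J, v)" by (cases p)
  have c: "v \<circ> sw j \<circ> sw i = v \<circ> sw i \<circ> sw j"
    using assms by (auto simp: fun_eq_iff transpose_def)
  have fx: "sw j (Suc i) = Suc i" "sw j i = i" "sw i (Suc j) = Suc j" "sw i j = j"
    using assms by (auto simp: transpose_def)
  show "gen_op (Zg j) (gen_op (Zg i) f) p = gen_op (Zg i) (gen_op (Zg j) f) p"
  proof (cases "i \<in> J \<and> j \<in> J \<and> inj v")
    case True
    then show ?thesis unfolding p
      apply (cases "v (Suc i) < v i"; cases "v (Suc j) < v j")
      apply (simp_all add: gen_op_Zg_active inj_comp_sw c fx split del: if_split)
      apply (simp_all add: algebra_simps)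
      done
  next
    case False
    then consider "\<not> inj v" | "inj v" "i \<notin> J" | "inj v" "j \<notin> J" by blast
    then show ?thesis
    proof cases
      case 1
      then show ?thesis unfolding p by (simp add: gen_op_Zg_not_inj)
    next
      case 2
      then show ?thesis unfolding p
        by (cases "j \<in> J") (simp_all add: gen_op_Zg_unlinked gen_op_Zg_active inj_comp_sw)
    next
      case 3
      then show ?thesis unfolding p
        by (cases "i \<in> J") (simp_all add: gen_op_Zg_unlinked gen_op_Zg_active inj_comp_sw)
    qed
  qed
qed

definition word_action :: "vec \<Rightarrow> gen list \<Rightarrow> vec" where
  "word_action f w = fold gen_op w f"

lemma word_action_Nil[simp]: "word_action f [] = f"
  by (simp add: word_action_def)

lemma word_action_Cons[simp]: "word_action f (g # w) = word_action (gen_op g f) w"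
  by (simp add: word_action_def)

lemma word_action_append: "word_action f (x @ y) = word_action (word_action f x) y"
  by (simp add: word_action_def)

lemma gen_op_linear:
  "gen_op g (\<lambda>p. \<Sum>x\<in>X. c x * F x p) = (\<lambda>p. \<Sum>x\<in>X. c x * gen_op g (F x) p)"
proof (rule ext)
  fix p :: "nat set \<times> (nat \<Rightarrow> nat)"
  obtain J v where p: "p = (J, v)" by (cases p)
  show "gen_op g (\<lambda>p. \<Sum>x\<in>X. c x * F x p) p = (\<Sum>x\<in>X. c x * gen_op g (F x) p)"
  proof (cases g)
    case (Eg i)
    then show ?thesis unfolding p by (auto simp: gen_op_Eg)
  next
    case (Zg i)
    then show ?thesis unfolding p
      by (cases "i \<in> J"; cases "inj v"; cases "v (Suc i) < v i")
         (simp_all add: gen_op_Zg_active gen_op_Zg_unlinked gen_op_Zg_not_inj sum.distrib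
           sum_distrib_left algebra_simps)
  qed
qed

lemma word_action_linear:
  "word_action (\<lambda>p. \<Sum>x\<in>X. c x * F x p) w = (\<lambda>p. \<Sum>x\<in>X. c x * word_action (F x) w p)"
  by (induction w arbitrary: F) (simp_all add: gen_op_linear)

lemma word_action_zero: "word_action (\<lambda>p. 0) w = (\<lambda>p. 0)"
  using word_action_linear[of "\<lambda>x. 0" "\<lambda>x p. 0" "{}" w] by simp

definition fa_action :: "fa \<Rightarrow> vec \<Rightarrow> vec" where
  "fa_action a f = (\<lambda>p. \<Sum>w\<in>Poly_Mapping.keys a. Poly_Mapping.lookup a w * word_action f w p)"

lemma fa_action_eq_sum:
  "finite W \<Longrightarrow> Poly_Mapping.keys a \<subseteq> W \<Longrightarrow>
     fa_action a f = (\<lambda>p. \<Sum>w\<in>W. Poly_Mapping.lookup a w * word_action f w p)"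
  unfolding fa_action_def by (rule ext, rule sum.mono_neutral_left) (auto simp: in_keys_iff)

lemma fa_action_add: "fa_action (a + b) f = (\<lambda>p. fa_action a f p + fa_action b f p)"
proof -
  define W where "W = Poly_Mapping.keys a \<union> Poly_Mapping.keys b"
  have W: "finite W" "Poly_Mapping.keys a \<subseteq> W" "Poly_Mapping.keys b \<subseteq> W"
      "Poly_Mapping.keys (a + b) \<subseteq> W"
    unfolding W_def using keys_add[of a b] by auto
  show ?thesis
    using fa_action_eq_sum[OF W(1) W(2)] fa_action_eq_sum[OF W(1) W(3)] fa_action_eq_sum[OF W(1) W(4)]
    by (simp add: lookup_add distrib_right sum.distrib)
qed

lemma fa_action_zero: "fa_action 0 f = (\<lambda>p. 0)"
  by (simp add: fa_action_def)

lemma fa_action_single: "fa_action (Poly_Mapping.single w s) f = (\<lambda>p. s * word_action f w p)"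
  by (subst fa_action_eq_sum[of "{w}"]) auto

lemma fa_action_word: "fa_action (fa_word w) f = word_action f w"
  by (simp add: fa_word_def fa_action_single)

lemma fa_action_sum: "fa_action (\<Sum>i\<in>I. F i) f = (\<lambda>p. \<Sum>i\<in>I. fa_action (F i) f p)"
  by (induction I rule: infinite_finite_induct) (simp_all add: fa_action_zero fa_action_add)

lemma fa_action_diff: "fa_action (a - b) f = (\<lambda>p. fa_action a f p - fa_action b f p)"
proof -
  define W where "W = Poly_Mapping.keys a \<union> Poly_Mapping.keys b"
  have kd: "Poly_Mapping.keys (a - b) \<subseteq> W"
    unfolding W_def by (auto simp: in_keys_iff lookup_minus)
  have W: "finite W" "Poly_Mapping.keys a \<subseteq> W" "Poly_Mapping.keys b \<subseteq> W"
    unfolding W_def by auto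
  show ?thesis
    using fa_action_eq_sum[OF W(1) W(2)] fa_action_eq_sum[OF W(1) W(3)] fa_action_eq_sum[OF W(1) kd]
    by (simp add: lookup_minus left_diff_distrib sum_subtractf)
qed

lemma fa_action_scal: "fa_action (fa_scal s a) f = (\<lambda>p. s * fa_action a f p)"
proof -
  have k: "Poly_Mapping.keys (fa_scal s a) \<subseteq> Poly_Mapping.keys a"
    by (auto simp: in_keys_iff lookup_fa_scal)
  show ?thesis using fa_action_eq_sum[OF _ k] unfolding fa_action_def
    by (simp add: lookup_fa_scal sum_distrib_left mult.assoc)
qed

lemma fa_action_mult: "fa_action (fa_mult a b) f = fa_action b (fa_action a f)"
proof (rule ext)
  fix p
  have "fa_action (fa_mult a b) f p = (\<Sum>x\<in>Poly_Mapping.keys a. \<Sum>y\<in>Poly_Mapping.keys b.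
      (Poly_Mapping.lookup a x * Poly_Mapping.lookup b y) * word_action f (x @ y) p)"
    unfolding fa_mult_def by (simp add: fa_action_sum fa_action_single)
  also have "\<dots> = (\<Sum>y\<in>Poly_Mapping.keys b. Poly_Mapping.lookup b y *
      (\<Sum>x\<in>Poly_Mapping.keys a. Poly_Mapping.lookup a x * word_action (word_action f x) y p))"
    by (subst sum.swap) (simp add: sum_distrib_left word_action_append algebra_simps)
  also have "\<dots> = fa_action b (fa_action a f) p"
    unfolding fa_action_def[of b] by (simp add: fa_action_def[of a] word_action_linear)
  finally show "fa_action (fa_mult a b) f p = fa_action b (fa_action a f) p" .
qed

lemma fa_action_zero_vec: "fa_action a (\<lambda>p. 0) = (\<lambda>p. 0)"
  by (simp add: fa_action_def word_action_zero)

lemma fa_action_rel: "r \<in> bH_rels n \<Longrightarrow> fa_action r f = (\<lambda>p. 0)"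
  unfolding bH_rels_def
proof (elim UnE CollectE exE conjE)
  fix i assume "r = fa_word [Eg i, Eg i] - fa_word [Eg i]"
  then show ?thesis by (simp add: fa_action_diff fa_action_word gen_op_e_idem)
next
  fix i j assume "r = fa_word [Eg i, Eg j] - fa_word [Eg j, Eg i]"
  then show ?thesis by (simp add: fa_action_diff fa_action_word gen_op_e_comm)
next
  fix i j assume r: "r = fa_word [Zg i, Zg j, Zg i] - fa_word [Zg j, Zg i, Zg j]" and "j = Suc i \<or> i = Suc j"
  then show ?thesis by (auto simp: fa_action_diff fa_action_word gen_op_braid)
next
  fix i j assume r: "r = fa_word [Zg i, Zg j] - fa_word [Zg j, Zg i]"
    and "1 \<le> i \<and> i < n \<and> 1 \<le> j \<and> j < n \<and> Suc i < j \<or> 1 \<le> i \<and> i < n \<and> 1 \<le> j \<and> j < n \<and> Suc j < i"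
  then consider "Suc i < j" | "Suc j < i" by blast
  then show ?thesis
  proof cases
    case 1
    then show ?thesis using r by (simp add: fa_action_diff fa_action_word gen_op_z_comm)
  next
    case 2
    then show ?thesis using r by (simp add: fa_action_diff fa_action_word gen_op_z_comm[OF 2])
  qed
next
  fix i assume "r = fa_word [Eg i, Zg i] - fa_word [Zg i]"
  then show ?thesis by (simp add: fa_action_diff fa_action_word gen_op_e_z)
next
  fix i j assume "r = fa_word [Eg i, Zg j] - fa_word [Zg j, Eg i]"
  then show ?thesis by (simp add: fa_action_diff fa_action_word gen_op_e_z_comm)
next
  fix i assume "r = fa_word [Zg i, Zg i] - fa_word [Eg i] - fa_scal (qL - qLinv) (fa_word [Zg i])"
  then show ?thesis by (simp add: fa_action_diff fa_action_word fa_action_scal gen_op_z_square qdiff_def)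
qed

lemma fa_action_bH_ideal: "r \<in> bH_ideal n \<Longrightarrow> fa_action r f = (\<lambda>p. 0)"
  by (induction r arbitrary: f rule: bH_ideal.induct)
     (simp_all add: fa_action_rel fa_action_zero fa_action_add fa_action_mult fa_action_zero_vec)

definition unit_vec :: "nat set \<Rightarrow> (nat \<Rightarrow> nat) \<Rightarrow> vec" where
  "unit_vec J0 u = (\<lambda>(J,v). if J = J0 \<and> v = u then 1 else 0)"

lemma gen_op_Eg_unit_vec:
  "inj u \<Longrightarrow> gen_op (Eg i) (unit_vec J0 u) = (if i \<in> J0 then unit_vec J0 u else (\<lambda>p. 0))"
  by (intro ext) (auto simp: gen_op.simps unit_vec_def split: prod.split)

lemma comp_sw_iff: "v \<circ> sw i = u \<longleftrightarrow> v = u \<circ> sw i"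
  by (auto simp: comp_assoc)

lemma gen_op_Zg_unit_vec:
  assumes "inj u" "i \<in> J0" "u i < u (Suc i)"
  shows "gen_op (Zg i) (unit_vec J0 u) = unit_vec J0 (u \<circ> sw i)"
proof (rule ext)
  fix p :: "nat set \<times> (nat \<Rightarrow> nat)"
  obtain J v where p: "p = (J, v)" by (cases p)
  have nu: "u \<circ> sw i \<noteq> u"
  proof
    assume "u \<circ> sw i = u"
    then have "u (sw i i) = u i" by (metis comp_apply)
    then show False using assms(3) by simp
  qed
  show "gen_op (Zg i) (unit_vec J0 u) p = unit_vec J0 (u \<circ> sw i) p"
  proof (cases "J = J0 \<and> v = u \<circ> sw i")
    case True
    then have "inj v" using assms(1) by (simp add: inj_comp_sw)
    then show ?thesis unfolding p using True assms nu by (simp add: gen_op_Zg unit_vec_def comp_assoc)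
  next
    case False
    have "unit_vec J0 u (J, v \<circ> sw i) = 0" using False by (auto simp: unit_vec_def comp_sw_iff)
    moreover have "(if v (Suc i) < v i then qdiff * unit_vec J0 u (J, v) else 0) = 0"
      using assms(3) by (auto simp: unit_vec_def)
    ultimately show ?thesis unfolding p using False by (auto simp: gen_op_Zg unit_vec_def)
  qed
qed

lemma word_action_Eg_unit_vec:
  "inj u \<Longrightarrow>
     word_action (unit_vec J0 u) (map Eg xs) = (if set xs \<subseteq> J0 then unit_vec J0 u else (\<lambda>p. 0))"
  by (induction xs) (auto simp: gen_op_Eg_unit_vec word_action_zero)

lemma word_action_reduced_unit_vec:
  "w permutes {1..n} \<Longrightarrow> reduced_word n w r \<Longrightarrow> set r \<subseteq> J0 \<Longrightarrow>
     word_action (unit_vec J0 id) (map Zg r) = unit_vec J0 w"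
proof (induction r arbitrary: w rule: rev_induct)
  case Nil
  then have "w = id" unfolding reduced_word_def by simp
  then show ?case by simp
next
  case (snoc i r)
  define u where "u = perm_of_word r"
  have red: "reduced_word n u r" and lt: "u i < u (Suc i)"
    using reduced_word_snocD[OF snoc.prems(2,1)] by (auto simp: u_def)
  have sets: "set (r @ [i]) \<subseteq> {1..<n}" and w: "perm_of_word (r @ [i]) = w"
    using snoc.prems unfolding reduced_word_def by auto
  have up: "u permutes {1..n}" unfolding u_def using sets by (intro perm_of_word_permutes) auto
  have IH: "word_action (unit_vec J0 id) (map Zg r) = unit_vec J0 u"
    using snoc.prems(3) by (intro snoc.IH[OF up red]) simp
  have "word_action (unit_vec J0 id) (map Zg (r @ [i])) = gen_op (Zg i) (unit_vec J0 u)"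
    by (simp add: word_action_append IH)
  also have "\<dots> = unit_vec J0 (u \<circ> sw i)"
    by (rule gen_op_Zg_unit_vec) (use up permutes_inj lt snoc.prems(3) in auto)
  also have "u \<circ> sw i = w" using w by (simp only: u_def perm_of_word_snoc)
  finally show ?case .
qed

lemma fa_action_basis_elt:
  assumes "(P, w) \<in> Gidx n"
  shows "fa_action (basis_elt n (P, w)) (unit_vec J0 id) =
           (if links P \<subseteq> J0 then unit_vec J0 w else (\<lambda>p. 0))"
proof -
  have P: "P \<in> LP n" and w: "w \<in> young_of_links n (links P)"
    using assms young_eq_young_of_links by (auto simp: Gidx_def)
  have wp: "w permutes {1..n}" using w by (simp add: young_of_links_def)
  have "set (filter (\<lambda>i. i \<in> links P) [1..<n]) = links P" using links_subset[OF P] by auto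
  then have e: "word_action (unit_vec J0 id) (E_list n (links P)) =
      (if links P \<subseteq> J0 then unit_vec J0 id else (\<lambda>p. 0))"
    unfolding E_list_def by (simp add: word_action_Eg_unit_vec)
  have z: "links P \<subseteq> J0 \<Longrightarrow> word_action (unit_vec J0 id) (map Zg (red_word n w)) = unit_vec J0 w"
    using red_word_props[OF w] by (intro word_action_reduced_unit_vec[OF wp]) auto
  show ?thesis unfolding basis_elt_eq basis_word_def
    by (simp add: fa_action_word word_action_append e z word_action_zero)
qed

lemma bH_ideal_combination_coeffs:
  assumes S: "(\<Sum>x\<in>Gidx n. fa_scal (c x) (basis_elt n x)) \<in> bH_ideal n" and "J0 \<subseteq> {1..<n}"
  shows "(\<Sum>x\<in>Gidx n. if links (fst x) \<subseteq> J0 \<and> snd x = w0 then c x else 0) = 0"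
proof -
  have "(\<Sum>x\<in>Gidx n. if links (fst x) \<subseteq> J0 \<and> snd x = w0 then c x else 0) =
      fa_action (\<Sum>x\<in>Gidx n. fa_scal (c x) (basis_elt n x)) (unit_vec J0 id) (J0, w0)"
  proof -
    have "c x * fa_action (basis_elt n x) (unit_vec J0 id) (J0, w0) =
        (if links (fst x) \<subseteq> J0 \<and> snd x = w0 then c x else 0)" if "x \<in> Gidx n" for x
      using fa_action_basis_elt[of "fst x" "snd x" n J0] that by (auto simp: unit_vec_def)
    then show ?thesis by (simp add: fa_action_sum fa_action_scal)
  qed
  also have "\<dots> = 0"
    using fa_action_bH_ideal[OF S] by simp
  finally show ?thesis .
qed

lemma Gidx_coeffs_zero_triangular:
  assumes "\<And>P0 w0. (P0, w0) \<in> Gidx n \<Longrightarrow>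
      (\<Sum>x\<in>Gidx n. if links (fst x) \<subseteq> links P0 \<and> snd x = w0 then c x else 0) = 0"
    and "x \<in> Gidx n"
  shows "c x = 0"
proof -
  have "c (P0, w0) = 0" if "(P0, w0) \<in> Gidx n" for P0 w0
    using that
  proof (induction "card (links P0)" arbitrary: P0 w0 rule: less_induct)
    case less
    have P0: "P0 \<in> LP n" using less.prems by (simp add: Gidx_def)
    have fin: "finite (links P0)" using links_subset[OF P0] finite_subset by blast
    let ?g = "\<lambda>x. if links (fst x) \<subseteq> links P0 \<and> snd x = w0 then c x else 0"
    have "?g x = 0" if x: "x \<in> Gidx n - {(P0, w0)}" for x
    proof (cases "links (fst x) \<subseteq> links P0 \<and> snd x = w0")
      case True
      have P: "fst x \<in> LP n" using x by (auto simp: Gidx_def)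
      then have "links (fst x) \<noteq> links P0" using links_inj[OF P P0] x True by (cases x) auto
      then have "card (links (fst x)) < card (links P0)"
        using True psubset_card_mono[OF fin] by blast
      then show ?thesis using less.hyps x by (cases x) auto
    qed auto
    then have "(\<Sum>x\<in>Gidx n. ?g x) = ?g (P0, w0)"
      using sum.remove[OF finite_Gidx less.prems, of ?g] by (simp add: sum.neutral)
    then show ?case using assms(1)[OF less.prems] by simp
  qed
  then show ?thesis using assms(2) by (cases x) auto
qed

theorem basis_independent:
  assumes "(\<Sum>x\<in>Gidx n. fa_scal (c x) (basis_elt n x)) \<in> bH_ideal n" and "x \<in> Gidx n"
  shows "c x = 0"
proof (rule Gidx_coeffs_zero_triangular[OF _ assms(2)])
  fix P0 w0 assume "(P0, w0) \<in> Gidx n"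
  then have "links P0 \<subseteq> {1..<n}" by (intro links_subset) (simp add: Gidx_def)
  then show "(\<Sum>x\<in>Gidx n. if links (fst x) \<subseteq> links P0 \<and> snd x = w0 then c x else 0) = 0"
    by (rule bH_ideal_combination_coeffs[OF assms(1)])
qed

section \<open>Spanning\<close>

lemma valid_word_map_Eg: "valid_word n (map Eg xs) \<longleftrightarrow> set xs \<subseteq> {1..<n}"
  by (auto simp: valid_word_def gen_valid_def)

lemma valid_word_map_Zg: "valid_word n (map Zg xs) \<longleftrightarrow> set xs \<subseteq> {1..<n}"
  by (auto simp: valid_word_def gen_valid_def)

lemma valid_word_E_list: "J \<subseteq> {1..<n} \<Longrightarrow> valid_word n (E_list n J)"
  by (auto simp: E_list_def valid_word_map_Eg)

lemma valid_word_basis_word: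
  "J \<subseteq> {1..<n} \<Longrightarrow> w \<in> young_of_links n J \<Longrightarrow> valid_word n (basis_word n J w)"
  using red_word_props(2) by (fastforce simp: basis_word_def valid_word_E_list valid_word_map_Zg)

lemma bH_equiv_E_to_back:
  assumes "x \<in> {1..<n}" "set ys \<subseteq> {1..<n}"
  shows "bH_equiv n (fa_word (Eg x # map Eg ys)) (fa_word (map Eg ys @ [Eg x]))"
  using assms(2)
proof (induction ys)
  case Nil
  then show ?case by simp
next
  case (Cons y ys)
  have "fa_word (Eg x # map Eg (y # ys)) = fa_word ([Eg x, Eg y] @ map Eg ys)"
    by simp
  also have "bH_equiv n \<dots> (fa_word ([Eg y, Eg x] @ map Eg ys))"
    by (rule bH_equiv_word_append_right[OF bH_equiv_e_comm])
       (use assms Cons.prems in \<open>auto simp: valid_word_map_Eg\<close>)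
  also have "\<dots> = fa_word ([Eg y] @ (Eg x # map Eg ys))"
    by simp
  also have "bH_equiv n \<dots> (fa_word ([Eg y] @ (map Eg ys @ [Eg x])))"
    by (rule bH_equiv_word_append_left[OF Cons.IH]) (use Cons.prems in \<open>auto simp: gen_valid_def\<close>)
  finally show ?case by simp
qed

lemma upt_split_at: "x \<in> {1..<n} \<Longrightarrow> [1..<n] = [1..<x] @ x # [Suc x..<n]"
proof -
  assume x: "x \<in> {1..<n}"
  have "[1..<n] = [1..<x] @ [x..<n]" using x upt_add_eq_append[of 1 x "n - x"] by simp
  also have "[x..<n] = x # [Suc x..<n]" using x by (simp add: upt_conv_Cons)
  finally show ?thesis .
qed

lemma bH_equiv_E_list_snoc:
  assumes x: "x \<in> {1..<n}" and J: "J \<subseteq> {1..<n}"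
  shows "bH_equiv n (fa_word (E_list n J @ [Eg x])) (fa_word (E_list n (insert x J)))"
proof -
  define A where "A = filter (\<lambda>i. i \<in> J) [1..<x]"
  define C where "C = filter (\<lambda>i. i \<in> J) [Suc x..<n]"
  define B where "B = (if x \<in> J then [Eg x] else [])"
  have A: "set A \<subseteq> {1..<n}" and C: "set C \<subseteq> {1..<n}" unfolding A_def C_def using x by auto
  have "filter (\<lambda>i. i \<in> insert x J) [1..<x] = A" "filter (\<lambda>i. i \<in> insert x J) [Suc x..<n] = C"
    unfolding A_def C_def by (auto intro: filter_cong)
  then have insert: "E_list n (insert x J) = map Eg A @ [Eg x] @ map Eg C"
    unfolding E_list_def by (subst upt_split_at[OF x]) simp
  have "bH_equiv n (fa_word (Eg x # E_list n J)) (fa_word (E_list n J @ [Eg x]))"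
    unfolding E_list_def by (rule bH_equiv_E_to_back[OF x]) (use J in auto)
  then have "bH_equiv n (fa_word (E_list n J @ [Eg x])) (fa_word (Eg x # E_list n J))"
    by (rule bH_equiv_sym)
  also have "Eg x # E_list n J = (Eg x # map Eg A) @ (B @ map Eg C)"
    unfolding E_list_def A_def B_def C_def by (subst upt_split_at[OF x]) simp
  also have "bH_equiv n (fa_word \<dots>) (fa_word ((map Eg A @ [Eg x]) @ (B @ map Eg C)))"
    by (rule bH_equiv_word_append_right[OF bH_equiv_E_to_back[OF x A]])
       (use x C in \<open>auto simp: B_def gen_valid_def valid_word_map_Eg\<close>)
  also have "bH_equiv n \<dots> (fa_word (E_list n (insert x J)))"
  proof (cases "x \<in> J")
    case True
    have "bH_equiv n (fa_word (map Eg A @ [Eg x, Eg x] @ map Eg C)) (fa_word (map Eg A @ [Eg x] @ map Eg C))"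
      by (rule bH_equiv_word_context[OF bH_equiv_e_idem]) (use x A C in \<open>auto simp: valid_word_map_Eg\<close>)
    then show ?thesis using True by (simp add: B_def insert)
  qed (simp add: B_def insert)
  finally show ?thesis .
qed

lemma bH_equiv_Z_past_E:
  assumes "i \<in> {1..<n}" "set r \<subseteq> {1..<n}"
  shows "bH_equiv n (fa_word (map Zg r @ [Eg i])) (fa_word (Eg i # map Zg r))"
  using assms(2)
proof (induction r)
  case Nil
  then show ?case by simp
next
  case (Cons y r)
  have "fa_word (map Zg (y # r) @ [Eg i]) = fa_word ([Zg y] @ (map Zg r @ [Eg i]))"
    by simp
  also have "bH_equiv n \<dots> (fa_word ([Zg y] @ (Eg i # map Zg r)))"
    by (rule bH_equiv_word_append_left[OF Cons.IH]) (use Cons.prems in \<open>auto simp: gen_valid_def\<close>)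
  also have "\<dots> = fa_word ([Zg y, Eg i] @ map Zg r)"
    by simp
  also have "bH_equiv n \<dots> (fa_word ([Eg i, Zg y] @ map Zg r))"
    by (rule bH_equiv_word_append_right[OF bH_equiv_sym[OF bH_equiv_e_z_comm]])
       (use assms Cons.prems in \<open>auto simp: valid_word_map_Zg\<close>)
  finally show ?case by simp
qed

lemma bH_equiv_E_past_Z:
  assumes J: "J \<subseteq> {1..<n}" and i: "i \<in> {1..<n}" and r: "set r \<subseteq> {1..<n}"
  shows "bH_equiv n (fa_word (E_list n J @ map Zg r @ [Eg i])) (fa_word (E_list n (insert i J) @ map Zg r))"
proof -
  have "bH_equiv n (fa_word (E_list n J @ (map Zg r @ [Eg i]))) (fa_word (E_list n J @ (Eg i # map Zg r)))"
    by (rule bH_equiv_word_append_left[OF bH_equiv_Z_past_E[OF i r] valid_word_E_list[OF J]])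
  also have "E_list n J @ (Eg i # map Zg r) = (E_list n J @ [Eg i]) @ map Zg r"
    by simp
  also have "bH_equiv n (fa_word \<dots>) (fa_word (E_list n (insert i J) @ map Zg r))"
    by (rule bH_equiv_word_append_right[OF bH_equiv_E_list_snoc[OF i J]]) (use r in \<open>simp add: valid_word_map_Zg\<close>)
  finally show ?thesis .
qed

lemma braid_equiv_imp_bH_equiv:
  "braid_equiv n r r' \<Longrightarrow> bH_equiv n (fa_word (map Zg r)) (fa_word (map Zg r'))"
proof (induction rule: braid_equiv.induct)
  case (brefl r)
  then show ?case by simp
next
  case (bsym r r')
  show ?case using bsym.IH by (rule bH_equiv_sym)
next
  case (btrans r r' r'')
  show ?case using btrans.IH by (rule bH_equiv_trans)
next
  case (bcomm xs ys i j)
  have "bH_equiv n (fa_word (map Zg xs @ [Zg i, Zg j] @ map Zg ys)) (fa_word (map Zg xs @ [Zg j, Zg i] @ map Zg ys))"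
    by (rule bH_equiv_word_context[OF bH_equiv_z_comm]) (use bcomm in \<open>auto simp: valid_word_map_Zg\<close>)
  then show ?case by simp
next
  case (bbraid xs ys i)
  have "bH_equiv n (fa_word (map Zg xs @ [Zg i, Zg (Suc i), Zg i] @ map Zg ys))
      (fa_word (map Zg xs @ [Zg (Suc i), Zg i, Zg (Suc i)] @ map Zg ys))"
    by (rule bH_equiv_word_context[OF bH_equiv_braid]) (use bbraid in \<open>auto simp: valid_word_map_Zg\<close>)
  then show ?case by simp
qed

lemma reduced_words_bH_equiv:
  "w permutes {1..n} \<Longrightarrow> reduced_word n w r \<Longrightarrow> reduced_word n w r' \<Longrightarrow>
     bH_equiv n (fa_word (map Zg r)) (fa_word (map Zg r'))"
  using reduced_word_braid_equiv_canonical braid_equiv_imp_bH_equiv bH_equiv_sym bH_equiv_trans by metis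

definition in_span :: "nat \<Rightarrow> fa \<Rightarrow> bool" where
  "in_span n a \<longleftrightarrow>
     (\<exists>c. (\<forall>x. x \<notin> Gidx n \<longrightarrow> c x = 0) \<and> bH_equiv n a (\<Sum>x\<in>Gidx n. fa_scal (c x) (basis_elt n x)))"

lemma in_span_zero: "in_span n 0"
  unfolding in_span_def by (rule exI[of _ "\<lambda>x. 0"]) simp

lemma in_span_add: "in_span n a \<Longrightarrow> in_span n b \<Longrightarrow> in_span n (a + b)"
proof -
  assume "in_span n a" "in_span n b"
  then obtain c d where c: "\<forall>x. x \<notin> Gidx n \<longrightarrow> c x = 0"
      "bH_equiv n a (\<Sum>x\<in>Gidx n. fa_scal (c x) (basis_elt n x))"
    and d: "\<forall>x. x \<notin> Gidx n \<longrightarrow> d x = 0" "bH_equiv n b (\<Sum>x\<in>Gidx n. fa_scal (d x) (basis_elt n x))"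
    unfolding in_span_def by blast
  have "bH_equiv n (a + b)
      ((\<Sum>x\<in>Gidx n. fa_scal (c x) (basis_elt n x)) + (\<Sum>x\<in>Gidx n. fa_scal (d x) (basis_elt n x)))"
    by (rule bH_equiv_add[OF c(2) d(2)])
  also have "\<dots> = (\<Sum>x\<in>Gidx n. fa_scal (c x + d x) (basis_elt n x))"
    by (simp add: fa_scal_add_left sum.distrib)
  finally show "in_span n (a + b)"
    unfolding in_span_def using c(1) d(1) by (intro exI[of _ "\<lambda>x. c x + d x"]) auto
qed

lemma in_span_scal: "in_span n a \<Longrightarrow> in_span n (fa_scal s a)"
proof -
  assume "in_span n a"
  then obtain c where c: "\<forall>x. x \<notin> Gidx n \<longrightarrow> c x = 0"
      "bH_equiv n a (\<Sum>x\<in>Gidx n. fa_scal (c x) (basis_elt n x))"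
    unfolding in_span_def by blast
  have "bH_equiv n (fa_scal s a) (fa_scal s (\<Sum>x\<in>Gidx n. fa_scal (c x) (basis_elt n x)))"
    by (rule bH_equiv_scal[OF c(2)])
  also have "\<dots> = (\<Sum>x\<in>Gidx n. fa_scal (s * c x) (basis_elt n x))"
    by (simp add: fa_scal_sum fa_scal_scal)
  finally show ?thesis unfolding in_span_def using c(1) by (intro exI[of _ "\<lambda>x. s * c x"]) auto
qed

lemma in_span_sum: "(\<And>i. i \<in> I \<Longrightarrow> in_span n (F i)) \<Longrightarrow> in_span n (\<Sum>i\<in>I. F i)"
  by (induction I rule: infinite_finite_induct) (auto intro: in_span_zero in_span_add)

lemma in_span_bH_equiv: "bH_equiv n a b \<Longrightarrow> in_span n b \<Longrightarrow> in_span n a"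
  unfolding in_span_def using bH_equiv_trans by blast

lemma in_span_basis_elt: "x \<in> Gidx n \<Longrightarrow> in_span n (basis_elt n x)"
proof -
  assume x: "x \<in> Gidx n"
  have "(\<Sum>y\<in>Gidx n. fa_scal (if y = x then 1 else 0) (basis_elt n y)) = basis_elt n x"
    using x finite_Gidx[of n] by (simp add: if_distrib[of "\<lambda>s. fa_scal s _"] sum.delta cong: if_cong)
  then show ?thesis unfolding in_span_def using x
    by (intro exI[of _ "\<lambda>y. if y = x then 1 else 0"]) auto
qed

lemma in_span_basis_word:
  assumes "J \<subseteq> {1..<n}" "w \<in> young_of_links n J"
  shows "in_span n (fa_word (basis_word n J w))"
proof -
  let ?P = "partition_of_links n J"
  have "?P \<in> LP n" "links ?P = J"
    using partition_of_links_in_LP links_partition_of_links assms(1) by blast+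
  then have "(?P, w) \<in> Gidx n" using assms(2) young_eq_young_of_links by (simp add: Gidx_def)
  from in_span_basis_elt[OF this] show ?thesis by (simp add: basis_elt_eq \<open>links ?P = J\<close>)
qed

lemma in_span_basis_word_times_E:
  assumes J: "J \<subseteq> {1..<n}" and w: "w \<in> young_of_links n J" and i: "i \<in> {1..<n}"
  shows "in_span n (fa_word (basis_word n J w @ [Eg i]))"
proof -
  have J': "insert i J \<subseteq> {1..<n}" using J i by auto
  have "w \<in> young_of_links n (insert i J)" using young_of_links_mono[of J "insert i J"] w by blast
  then have "in_span n (fa_word (E_list n (insert i J) @ map Zg (red_word n w)))"
    using in_span_basis_word[OF J'] by (simp add: basis_word_def)
  moreover have "set (red_word n w) \<subseteq> {1..<n}" using red_word_props(2)[OF w] J by blast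
  then have "bH_equiv n (fa_word (basis_word n J w @ [Eg i]))
      (fa_word (E_list n (insert i J) @ map Zg (red_word n w)))"
    using bH_equiv_E_past_Z[OF J i] by (simp add: basis_word_def)
  ultimately show ?thesis using in_span_bH_equiv by blast
qed

lemma in_span_basis_word_times_Z_ascent:
  assumes J: "J \<subseteq> {1..<n}" and w: "w \<in> young_of_links n J" and i: "i \<in> J"
    and asc: "w i < w (Suc i)"
  shows "in_span n (fa_word (basis_word n J w @ [Zg i]))"
proof -
  have wp: "w permutes {1..n}" using w by (simp add: young_of_links_def)
  have i1: "1 \<le> i" "i < n" using i J by auto
  have w': "w \<circ> sw i \<in> young_of_links n J" by (rule young_of_links_comp_sw[OF J i w])
  have w'p: "w \<circ> sw i permutes {1..n}" using w' by (simp add: young_of_links_def)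
  have "reduced_word n (w \<circ> sw i) (red_word n w @ [i])"
    by (rule reduced_word_snoc_ascent[OF red_word_props(1)[OF w] wp i1 asc])
  then have "bH_equiv n (fa_word (map Zg (red_word n w @ [i]))) (fa_word (map Zg (red_word n (w \<circ> sw i))))"
    by (rule reduced_words_bH_equiv[OF w'p _ red_word_props(1)[OF w']])
  then have "bH_equiv n (fa_word (basis_word n J w @ [Zg i])) (fa_word (basis_word n J (w \<circ> sw i)))"
    unfolding basis_word_def using bH_equiv_word_append_left[OF _ valid_word_E_list[OF J]] by simp
  then show ?thesis using in_span_basis_word[OF J w'] in_span_bH_equiv by blast
qed

lemma in_span_basis_word_times_Z_descent:
  assumes J: "J \<subseteq> {1..<n}" and w: "w \<in> young_of_links n J" and i: "i \<in> J"
    and desc: "w (Suc i) < w i"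
  shows "in_span n (fa_word (basis_word n J w @ [Zg i]))"
proof -
  define u where "u = w \<circ> sw i"
  define x where "x = basis_word n J u"
  have wp: "w permutes {1..n}" using w by (simp add: young_of_links_def)
  have i1: "1 \<le> i" "i < n" using i J by auto
  have u: "u \<in> young_of_links n J" unfolding u_def by (rule young_of_links_comp_sw[OF J i w])
  have up: "u permutes {1..n}" using u by (simp add: young_of_links_def)
  have x: "valid_word n x" unfolding x_def by (rule valid_word_basis_word[OF J u])
  have "reduced_word n (u \<circ> sw i) (red_word n u @ [i])"
    using desc by (intro reduced_word_snoc_ascent[OF red_word_props(1)[OF u] up i1]) (simp add: u_def)
  then have "bH_equiv n (fa_word (map Zg (red_word n w))) (fa_word (map Zg (red_word n u @ [i])))"
    by (intro reduced_words_bH_equiv[OF wp red_word_props(1)[OF w]]) (simp add: u_def comp_assoc)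
  then have w_eq: "bH_equiv n (fa_word (basis_word n J w)) (fa_word (x @ [Zg i]))"
    unfolding basis_word_def x_def using bH_equiv_word_append_left[OF _ valid_word_E_list[OF J]] by simp
  have "bH_equiv n (fa_word (basis_word n J w @ [Zg i])) (fa_word (x @ [Zg i, Zg i]))"
    using bH_equiv_word_append_right[OF w_eq, of "[Zg i]"] i1 by (simp add: gen_valid_def)
  also have "bH_equiv n \<dots> (fa_word (x @ [Eg i]) + fa_scal qdiff (fa_word (x @ [Zg i])))"
    using bH_equiv_lmult[OF FA_word[OF x] bH_equiv_z_square[OF i1]]
    by (simp add: fa_mult_add_right fa_mult_scal_right fa_word_mult)
  finally have "bH_equiv n (fa_word (basis_word n J w @ [Zg i]))
      (fa_word (x @ [Eg i]) + fa_scal qdiff (fa_word (x @ [Zg i])))" .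
  moreover have "in_span n (fa_word (x @ [Eg i]))"
    unfolding x_def using in_span_basis_word_times_E[OF J u] i1 by simp
  moreover have "in_span n (fa_word (x @ [Zg i]))"
    using in_span_bH_equiv[OF bH_equiv_sym[OF w_eq] in_span_basis_word[OF J w]] .
  ultimately show ?thesis using in_span_add in_span_scal in_span_bH_equiv by blast
qed

lemma in_span_basis_word_times_Z:
  assumes J: "J \<subseteq> {1..<n}" and w: "w \<in> young_of_links n J" and i: "i \<in> {1..<n}"
  shows "in_span n (fa_word (basis_word n J w @ [Zg i]))"
proof -
  have in_span_link: "in_span n (fa_word (basis_word n J' w @ [Zg i]))"
    if J': "J' \<subseteq> {1..<n}" "J \<subseteq> J'" "i \<in> J'" for J'
  proof -
    have w': "w \<in> young_of_links n J'" using young_of_links_mono[OF J'(2)] w by blast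
    have "w i \<noteq> w (Suc i)"
      using w by (intro permutes_neq[of w "{1..n}"]) (auto simp: young_of_links_def)
    then show ?thesis
      using in_span_basis_word_times_Z_ascent[OF J'(1) w' J'(3)]
        in_span_basis_word_times_Z_descent[OF J'(1) w' J'(3)] by (cases "w i < w (Suc i)") auto
  qed
  show ?thesis
  proof (cases "i \<in> J")
    case True
    then show ?thesis using in_span_link[OF J] by simp
  next
    case False
    have r: "set (red_word n w) \<subseteq> {1..<n}" using red_word_props(2)[OF w] J by blast
    have "bH_equiv n (fa_word (basis_word n J w @ [Zg i])) (fa_word (basis_word n J w @ [Eg i, Zg i]))"
      by (rule bH_equiv_word_append_left[OF bH_equiv_sym[OF bH_equiv_e_z] valid_word_basis_word[OF J w]])
         (use i in auto)
    also have "basis_word n J w @ [Eg i, Zg i] = (E_list n J @ map Zg (red_word n w) @ [Eg i]) @ [Zg i]"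
      by (simp add: basis_word_def)
    also have "bH_equiv n (fa_word \<dots>) (fa_word (basis_word n (insert i J) w @ [Zg i]))"
      using bH_equiv_word_append_right[OF bH_equiv_E_past_Z[OF J i r], of "[Zg i]"] i
      by (simp add: basis_word_def gen_valid_def)
    finally show ?thesis
      using in_span_link[of "insert i J"] J i in_span_bH_equiv by blast
  qed
qed

lemma in_span_basis_elt_times_gen:
  assumes x: "x \<in> Gidx n" and g: "gen_valid n g"
  shows "in_span n (fa_mult (basis_elt n x) (fa_word [g]))"
proof -
  obtain P w where xw: "x = (P, w)" by (cases x)
  have P: "P \<in> LP n" and w: "w \<in> young_of_links n (links P)"
    using x xw young_eq_young_of_links by (auto simp: Gidx_def)
  have J: "links P \<subseteq> {1..<n}" by (rule links_subset[OF P])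
  have e: "fa_mult (basis_elt n x) (fa_word [g]) = fa_word (basis_word n (links P) w @ [g])"
    by (simp add: xw basis_elt_eq fa_word_mult)
  show ?thesis
    unfolding e using g in_span_basis_word_times_E[OF J w] in_span_basis_word_times_Z[OF J w]
    by (cases g) (auto simp: gen_valid_def)
qed

lemma in_span_word: "valid_word n w \<Longrightarrow> in_span n (fa_word w)"
proof (induction w rule: rev_induct)
  case Nil
  have id: "id \<in> young_of_links n {}" by (simp add: young_of_links_def)
  have "reduced_word n id (red_word n id)" by (rule red_word_props(1)[OF id])
  then have "red_word n id = []" using reduced_word_iff_length[of id n] by simp
  then show ?case using in_span_basis_word[OF _ id] by (simp add: basis_word_def E_list_def)
next
  case (snoc g w)
  then have vw: "valid_word n w" and g: "gen_valid n g" by auto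
  obtain c where c: "\<forall>x. x \<notin> Gidx n \<longrightarrow> c x = 0"
      "bH_equiv n (fa_word w) (\<Sum>x\<in>Gidx n. fa_scal (c x) (basis_elt n x))"
    using snoc.IH[OF vw] unfolding in_span_def by blast
  have "bH_equiv n (fa_word (w @ [g])) (fa_mult (\<Sum>x\<in>Gidx n. fa_scal (c x) (basis_elt n x)) (fa_word [g]))"
    using bH_equiv_rmult[OF FA_word c(2), of "[g]"] g by (simp add: fa_word_mult)
  also have "\<dots> = (\<Sum>x\<in>Gidx n. fa_scal (c x) (fa_mult (basis_elt n x) (fa_word [g])))"
    by (simp add: fa_mult_sum_left fa_mult_scal_left)
  finally have "bH_equiv n (fa_word (w @ [g]))
      (\<Sum>x\<in>Gidx n. fa_scal (c x) (fa_mult (basis_elt n x) (fa_word [g])))" .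
  moreover have "in_span n (\<Sum>x\<in>Gidx n. fa_scal (c x) (fa_mult (basis_elt n x) (fa_word [g])))"
    by (intro in_span_sum in_span_scal in_span_basis_elt_times_gen[OF _ g])
  ultimately show ?case by (rule in_span_bH_equiv)
qed

theorem FA_in_span: "a \<in> FA n \<Longrightarrow> in_span n a"
proof -
  assume a: "a \<in> FA n"
  have "a = (\<Sum>w\<in>Poly_Mapping.keys a. fa_scal (Poly_Mapping.lookup a w) (fa_word w))"
    by (subst poly_mapping_sum_single) (simp add: fa_word_def fa_scal_single)
  moreover have "in_span n (\<Sum>w\<in>Poly_Mapping.keys a. fa_scal (Poly_Mapping.lookup a w) (fa_word w))"
    using a by (intro in_span_sum in_span_scal in_span_word) (auto simp: FA_iff_valid_word)
  ultimately show ?thesis by simp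
qed

section \<open>Counting\<close>

lemma joined_gap:
  assumes "k \<notin> J" "joined J a b"
  shows "a \<le> k \<longleftrightarrow> b \<le> k"
proof -
  have "\<not> (min a b \<le> k \<and> k < max a b)" using assms unfolding joined_def by blast
  then show ?thesis by (cases "a \<le> b") (auto simp: min_def max_def)
qed

lemma permutes_restrict_id_invariant:
  assumes "finite A" "inj_on w A" "w ` A \<subseteq> A"
  shows "restrict_id w A permutes A"
proof (rule permutes_restrict_id)
  have "w ` A = A" by (rule endo_inj_surj[OF assms(1,3,2)])
  then show "bij_betw w A A" using assms(2) by (simp add: bij_betw_def)
qed

lemma comp_permutes_disjoint_cancel:
  assumes "A \<inter> B = {}" "u permutes A" "v permutes B" "u' permutes A" "v' permutes B"
    and eq: "u \<circ> v = u' \<circ> v'"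
  shows "u = u' \<and> v = v'"
proof -
  have "u a = u' a \<and> v a = v' a" for a
  proof (cases "a \<in> B")
    case True
    then have "v a \<in> B" "v' a \<in> B"
      using permutes_in_image[OF assms(3)] permutes_in_image[OF assms(5)] by auto
    then have "v a \<notin> A" "v' a \<notin> A" "a \<notin> A" using True assms(1) by auto
    then have "u (v a) = v a" "u' (v' a) = v' a" "u a = a" "u' a = a"
      using permutes_not_in[OF assms(2)] permutes_not_in[OF assms(4)] by auto
    then show ?thesis using fun_cong[OF eq, of a] by simp
  next
    case False
    then have "v a = a" "v' a = a"
      using permutes_not_in[OF assms(3)] permutes_not_in[OF assms(5)] by auto
    then show ?thesis using fun_cong[OF eq, of a] by simp
  qed
  then show ?thesis by auto
qed

lemma young_of_links_gap_decompose:
  assumes kn: "k < n" and J0: "J0 \<subseteq> {1..<k}" and w: "w \<in> young_of_links n (J0 \<union> {Suc k..<n})"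
  shows "\<exists>u v. u \<in> young_of_links k J0 \<and> v permutes {Suc k..n} \<and> w = u \<circ> v"
proof -
  have wp: "w permutes {1..n}" and wj: "\<And>a. joined (J0 \<union> {Suc k..<n}) a (w a)"
    using w by (auto simp: young_of_links_def)
  have gap: "a \<le> k \<longleftrightarrow> w a \<le> k" for a by (rule joined_gap[OF _ wj]) (use J0 in auto)
  have range: "w a \<in> {1..n} \<longleftrightarrow> a \<in> {1..n}" for a by (rule permutes_in_image[OF wp])
  have low: "w a \<in> {1..k}" if "a \<in> {1..k}" for a using that gap[of a] range[of a] kn by auto
  have high: "w a \<in> {Suc k..n}" if "a \<in> {Suc k..n}" for a using that gap[of a] range[of a] by auto
  have inj: "inj_on w A" for A using permutes_inj[OF wp] by (rule inj_on_subset) simp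
  define u where "u = restrict_id w {1..k}"
  define v where "v = restrict_id w {Suc k..n}"
  have "u permutes {1..k}"
    unfolding u_def by (rule permutes_restrict_id_invariant) (use low inj in auto)
  moreover have "joined J0 a (u a)" for a
  proof (cases "a \<in> {1..k}")
    case True
    then have "w a \<le> k" using low by auto
    then show ?thesis using wj[of a] True by (auto simp: u_def joined_def)
  qed (simp add: u_def)
  moreover have "v permutes {Suc k..n}"
    unfolding v_def by (rule permutes_restrict_id_invariant) (use high inj in auto)
  moreover have "w = u \<circ> v"
  proof
    fix a
    consider "a \<in> {1..k}" | "a \<in> {Suc k..n}" | "a \<notin> {1..n}" using kn by fastforce
    then show "w a = (u \<circ> v) a"
    proof cases
      case 1
      then show ?thesis by (simp add: u_def v_def)
    next
      case 2
      then show ?thesis using high[of a] by (simp add: u_def v_def)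
    next
      case 3
      then have "a \<notin> {1..k}" "a \<notin> {Suc k..n}" using kn by auto
      then show ?thesis using permutes_not_in[OF wp 3] by (simp add: u_def v_def)
    qed
  qed
  ultimately show ?thesis by (intro exI[of _ u] exI[of _ v]) (auto simp: young_of_links_def)
qed

lemma comp_in_young_of_links_gap:
  assumes kn: "k < n" and "u \<in> young_of_links k J0" and v: "v permutes {Suc k..n}"
  shows "u \<circ> v \<in> young_of_links n (J0 \<union> {Suc k..<n})"
proof -
  from assms(2) have u: "u permutes {1..k}" "\<And>a. joined J0 a (u a)"
    by (auto simp: young_of_links_def)
  have "u permutes {1..n}" "v permutes {1..n}"
    using kn by (auto intro: permutes_subset[OF u(1)] permutes_subset[OF v])
  then have "u \<circ> v permutes {1..n}" by (rule permutes_compose[rotated])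
  moreover have "joined (J0 \<union> {Suc k..<n}) a ((u \<circ> v) a)" for a
  proof (cases "a \<in> {Suc k..n}")
    case True
    then have "v a \<in> {Suc k..n}" using permutes_in_image[OF v] by simp
    moreover from this have "(u \<circ> v) a = v a" using permutes_not_in[OF u(1)] by (simp add: comp_def)
    ultimately show ?thesis using True by (auto simp: joined_def)
  next
    case False
    then have "(u \<circ> v) a = u a" using permutes_not_in[OF v] by (simp add: comp_def)
    then show ?thesis using u(2)[of a] joined_mono[of J0] by auto
  qed
  ultimately show ?thesis by (simp add: young_of_links_def)
qed

lemma young_of_links_gap_split:
  assumes "k < n" "J0 \<subseteq> {1..<k}"
  shows "young_of_links n (J0 \<union> {Suc k..<n}) =
           (\<lambda>(u, v). u \<circ> v) ` (young_of_links k J0 \<times> {v. v permutes {Suc k..n}})"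
proof (intro equalityI subsetI)
  fix w assume "w \<in> young_of_links n (J0 \<union> {Suc k..<n})"
  then obtain u v where "u \<in> young_of_links k J0" "v permutes {Suc k..n}" "w = u \<circ> v"
    using young_of_links_gap_decompose[OF assms] by blast
  then show "w \<in> (\<lambda>(u, v). u \<circ> v) ` (young_of_links k J0 \<times> {v. v permutes {Suc k..n}})"
    by (intro rev_image_eqI[of "(u, v)"]) auto
qed (auto intro: comp_in_young_of_links_gap[OF assms(1)])

lemma card_young_of_links_split:
  assumes "k < n" "J0 \<subseteq> {1..<k}"
  shows "card (young_of_links n (J0 \<union> {Suc k..<n})) = card (young_of_links k J0) * fact (n - k)"
proof -
  have "inj_on (\<lambda>(u, v). u \<circ> v) (young_of_links k J0 \<times> {v. v permutes {Suc k..n}})"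
  proof (rule inj_onI)
    fix x y
    assume "x \<in> young_of_links k J0 \<times> {v. v permutes {Suc k..n}}"
      and "y \<in> young_of_links k J0 \<times> {v. v permutes {Suc k..n}}"
      and "(\<lambda>(u, v). u \<circ> v) x = (\<lambda>(u, v). u \<circ> v) y"
    moreover obtain u v u' v' where "x = (u, v)" "y = (u', v')" by (cases x, cases y)
    ultimately show "x = y"
      using comp_permutes_disjoint_cancel[of "{1..k}" "{Suc k..n}" u v u' v']
      by (auto simp: young_of_links_def)
  qed
  moreover have "card {v. v permutes {Suc k..n}} = fact (n - k)"
    by (rule card_permutations) simp_all
  ultimately show ?thesis
    by (simp add: young_of_links_gap_split[OF assms] card_image card_cartesian_product)
qed

definition links_count :: "nat \<Rightarrow> nat" where
  "links_count n = (\<Sum>J\<in>Pow {1..<n}. card (young_of_links n J))"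

lemma links_count_0: "links_count 0 = 1"
proof -
  have "young_of_links 0 {} = {id}" by (auto simp: young_of_links_def)
  then show ?thesis by (simp add: links_count_def)
qed

lemma Pow_decomp_last_gap:
  assumes "1 \<le> n"
  shows "Pow {1..<n} = (\<Union>k<n. (\<lambda>J0. J0 \<union> {Suc k..<n}) ` Pow {1..<k})"
proof
  show "Pow {1..<n} \<subseteq> (\<Union>k<n. (\<lambda>J0. J0 \<union> {Suc k..<n}) ` Pow {1..<k})"
  proof
    fix J assume J: "J \<in> Pow {1..<n}"
    define k where "k = Max (insert 0 ({1..<n} - J))"
    have fin: "finite (insert 0 ({1..<n} - J))" by simp
    have "k \<in> insert 0 ({1..<n} - J)" unfolding k_def by (rule Max_in[OF fin]) simp
    then have kn: "k < n" and kJ: "k \<notin> J" using assms J by auto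
    have kmax: "x \<le> k" if "x \<in> {1..<n} - J" for x unfolding k_def using fin that by auto
    have "J = (J \<inter> {1..<k}) \<union> {Suc k..<n}"
    proof
      show "J \<subseteq> J \<inter> {1..<k} \<union> {Suc k..<n}"
      proof
        fix x assume "x \<in> J"
        then show "x \<in> J \<inter> {1..<k} \<union> {Suc k..<n}"
          using J kJ by (cases "x < k") (auto simp: not_less le_eq_less_or_eq)
      qed
      show "J \<inter> {1..<k} \<union> {Suc k..<n} \<subseteq> J"
      proof
        fix x assume "x \<in> J \<inter> {1..<k} \<union> {Suc k..<n}"
        then show "x \<in> J" using kmax[of x] by (cases "x \<in> J") auto
      qed
    qed
    then show "J \<in> (\<Union>k<n. (\<lambda>J0. J0 \<union> {Suc k..<n}) ` Pow {1..<k})" using kn by blast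
  qed
qed auto

lemma last_gap_unique:
  assumes "J0 \<subseteq> {1..<k}" "J0' \<subseteq> {1..<k'}" "k < n" "k' < n"
    and eq: "J0 \<union> {Suc k..<n} = J0' \<union> {Suc k'..<n}"
  shows "k = k' \<and> J0 = J0'"
proof -
  have "\<not> k < k'"
  proof
    assume "k < k'"
    then have "k' \<in> J0 \<union> {Suc k..<n}" using assms(4) by auto
    then have "k' \<in> J0' \<union> {Suc k'..<n}" by (simp only: eq)
    then show False using assms(2) by auto
  qed
  moreover have "\<not> k' < k"
  proof
    assume "k' < k"
    then have "k \<in> J0' \<union> {Suc k'..<n}" using assms(3) by auto
    then have "k \<in> J0 \<union> {Suc k..<n}" by (simp only: eq)
    then show False using assms(1) by auto
  qed
  ultimately have "k = k'" by simp
  moreover have "J0 = (J0 \<union> {Suc k..<n}) \<inter> {1..<k}" "J0' = (J0' \<union> {Suc k'..<n}) \<inter> {1..<k'}"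
    using assms(1,2) by auto
  ultimately show ?thesis using eq by simp
qed

lemma links_count_rec:
  assumes "1 \<le> n"
  shows "links_count n = (\<Sum>k<n. links_count k * fact (n - k))"
proof -
  define G where "G k = (\<lambda>J0. J0 \<union> {Suc k..<n}) ` Pow {1..<k}" for k
  have disj: "G k \<inter> G k' = {}" if kk': "k \<in> {..<n}" "k' \<in> {..<n}" "k \<noteq> k'" for k k'
  proof -
    have "J \<notin> G k'" if "J \<in> G k" for J
    proof
      assume "J \<in> G k'"
      with \<open>J \<in> G k\<close> obtain J0 J0' where "J0 \<subseteq> {1..<k}" "J0' \<subseteq> {1..<k'}"
        and "J0 \<union> {Suc k..<n} = J0' \<union> {Suc k'..<n}"
        by (auto simp: G_def)
      then show False using last_gap_unique[of J0 k J0' k' n] kk' by auto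
    qed
    then show ?thesis by blast
  qed
  have inj: "inj_on (\<lambda>J0. J0 \<union> {Suc k..<n}) (Pow {1..<k})" if "k < n" for k
  proof (rule inj_onI)
    fix A B assume "A \<in> Pow {1..<k}" "B \<in> Pow {1..<k}" "A \<union> {Suc k..<n} = B \<union> {Suc k..<n}"
    then show "A = B" using last_gap_unique[of A k B k n] that by auto
  qed
  have "links_count n = (\<Sum>J\<in>(\<Union>k<n. G k). card (young_of_links n J))"
    unfolding links_count_def G_def using Pow_decomp_last_gap[OF assms] by simp
  also have "\<dots> = (\<Sum>k<n. \<Sum>J\<in>G k. card (young_of_links n J))"
    by (rule sum.UNION_disjoint) (simp, simp add: G_def, use disj in blast)
  also have "\<dots> = (\<Sum>k<n. \<Sum>J0\<in>Pow {1..<k}. card (young_of_links n (J0 \<union> {Suc k..<n})))"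
    unfolding G_def by (rule sum.cong[OF refl]) (use sum.reindex[OF inj] in \<open>simp add: comp_def\<close>)
  also have "\<dots> = (\<Sum>k<n. \<Sum>J0\<in>Pow {1..<k}. card (young_of_links k J0) * fact (n - k))"
    by (intro sum.cong refl card_young_of_links_split) auto
  also have "\<dots> = (\<Sum>k<n. links_count k * fact (n - k))"
    by (simp add: links_count_def sum_distrib_right)
  finally show ?thesis .
qed

lemma member_le_sum_list: "x \<in> set xs \<Longrightarrow> (x::nat) \<le> sum_list xs"
  by (induction xs) auto

lemma length_le_sum_list: "0 \<notin> set xs \<Longrightarrow> length xs \<le> sum_list (xs::nat list)"
  by (induction xs) auto

lemma finite_compositions: "finite (compositions n)"
proof (rule finite_subset)
  show "compositions n \<subseteq> {xs. set xs \<subseteq> {0..n} \<and> length xs \<le> n}"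
    using member_le_sum_list length_le_sum_list unfolding compositions_def by fastforce
  show "finite {xs. set xs \<subseteq> {0..n} \<and> length xs \<le> n}" by (rule finite_lists_length_le) simp
qed

definition composition_count :: "nat \<Rightarrow> nat" where
  "composition_count n = (\<Sum>xs\<in>compositions n. prod_list (map fact xs))"

lemma compositions_0: "compositions 0 = {[]}"
proof -
  have "xs = []" if "sum_list xs = 0" "0 \<notin> set (xs::nat list)" for xs
    using that by (cases xs) auto
  then show ?thesis unfolding compositions_def by auto
qed

lemma composition_count_0: "composition_count 0 = 1"
  by (simp add: composition_count_def compositions_0)

lemma compositions_decomp_last:
  assumes "1 \<le> n"
  shows "compositions n = (\<Union>k<n. (\<lambda>xs. xs @ [n - k]) ` compositions k)"
proof
  show "compositions n \<subseteq> (\<Union>k<n. (\<lambda>xs. xs @ [n - k]) ` compositions k)"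
  proof
    fix xs assume xs: "xs \<in> compositions n"
    then have "xs \<noteq> []" using assms by (auto simp: compositions_def)
    then obtain ys m where ym: "xs = ys @ [m]" by (metis rev_exhaust)
    have m: "m \<noteq> 0" "sum_list ys + m = n" "0 \<notin> set ys" using xs ym by (auto simp: compositions_def)
    define k where "k = sum_list ys"
    have "k < n" "m = n - k" using m by (auto simp: k_def)
    moreover have "ys \<in> compositions k" using m by (simp add: compositions_def k_def)
    ultimately show "xs \<in> (\<Union>k<n. (\<lambda>xs. xs @ [n - k]) ` compositions k)" using ym by blast
  qed
  show "(\<Union>k<n. (\<lambda>xs. xs @ [n - k]) ` compositions k) \<subseteq> compositions n"
    by (auto simp: compositions_def)
qed

lemma composition_count_rec:
  assumes "1 \<le> n"
  shows "composition_count n = (\<Sum>k<n. composition_count k * fact (n - k))"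
proof -
  define G where "G k = (\<lambda>xs. xs @ [n - k]) ` compositions k" for k
  have disj: "G k \<inter> G k' = {}" if "k \<in> {..<n}" "k' \<in> {..<n}" "k \<noteq> k'" for k k'
    using that by (auto simp: G_def)
  have inj: "inj_on (\<lambda>xs. xs @ [n - k]) (compositions k)" for k by (rule inj_onI) simp
  have "composition_count n = (\<Sum>xs\<in>(\<Union>k<n. G k). prod_list (map fact xs))"
    unfolding composition_count_def G_def using compositions_decomp_last[OF assms] by simp
  also have "\<dots> = (\<Sum>k<n. \<Sum>xs\<in>G k. prod_list (map fact xs))"
    by (rule sum.UNION_disjoint) (simp, simp add: G_def finite_compositions, use disj in blast)
  also have "\<dots> = (\<Sum>k<n. \<Sum>xs\<in>compositions k. prod_list (map fact (xs @ [n - k])))"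
    unfolding G_def by (rule sum.cong[OF refl], subst sum.reindex[OF inj]) (simp add: comp_def)
  also have "\<dots> = (\<Sum>k<n. composition_count k * fact (n - k))"
    by (simp add: composition_count_def sum_distrib_right)
  finally show ?thesis .
qed

lemma links_count_eq_composition_count: "links_count n = composition_count n"
proof (induction n rule: less_induct)
  case (less n)
  show ?case
  proof (cases "n = 0")
    case True
    then show ?thesis by (simp add: links_count_0 composition_count_0)
  next
    case False
    then have n: "1 \<le> n" by simp
    have "links_count n = (\<Sum>k<n. links_count k * fact (n - k))" by (rule links_count_rec[OF n])
    also have "\<dots> = (\<Sum>k<n. composition_count k * fact (n - k))" using less.IH by simp
    also have "\<dots> = composition_count n" by (rule composition_count_rec[OF n, symmetric])
    finally show ?thesis .
  qed
qed

lemma card_Gidx_eq_links_count: "card (Gidx n) = links_count n"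
proof -
  have "card (Gidx n) = (\<Sum>P\<in>LP n. card (young n P))"
    by (simp add: Gidx_Sigma finite_LP finite_young)
  also have "\<dots> = (\<Sum>P\<in>LP n. card (young_of_links n (links P)))"
    by (simp add: young_eq_young_of_links)
  also have "\<dots> = links_count n"
    unfolding links_count_def by (rule sum.reindex_bij_betw[OF bij_betw_links_LP])
  finally show ?thesis .
qed

theorem card_Gidx_compositions: "card (Gidx n) = (\<Sum>xs\<in>compositions n. prod_list (map fact xs))"
  using card_Gidx_eq_links_count links_count_eq_composition_count by (simp add: composition_count_def)

theorem theorem5p4:
  fixes n :: nat
  assumes "n \<ge> 1"
  shows "finite (Gidx n)
    \<and> (\<forall>a\<in>FA n. \<exists>c. (\<forall>x. x \<notin> Gidx n \<longrightarrow> c x = 0) \<and>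
          a - (\<Sum>x\<in>Gidx n. fa_scal (c x) (basis_elt n x)) \<in> bH_ideal n)
    \<and> (\<forall>c. (\<Sum>x\<in>Gidx n. fa_scal (c x) (basis_elt n x)) \<in> bH_ideal n
          \<longrightarrow> (\<forall>x\<in>Gidx n. c x = 0))
    \<and> card (Gidx n) = (\<Sum>xs\<in>compositions n. prod_list (map fact xs))"
proof (intro conjI)
  show "finite (Gidx n)" by (rule finite_Gidx)
  show "\<forall>a\<in>FA n. \<exists>c. (\<forall>x. x \<notin> Gidx n \<longrightarrow> c x = 0) \<and>
          a - (\<Sum>x\<in>Gidx n. fa_scal (c x) (basis_elt n x)) \<in> bH_ideal n"
    using FA_in_span unfolding in_span_def bH_equiv_def by blast
  show "\<forall>c. (\<Sum>x\<in>Gidx n. fa_scal (c x) (basis_elt n x)) \<in> bH_ideal n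
          \<longrightarrow> (\<forall>x\<in>Gidx n. c x = 0)"
    using basis_independent by blast
  show "card (Gidx n) = (\<Sum>xs\<in>compositions n. prod_list (map fact xs))" by (rule card_Gidx_compositions)
qed

end
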